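(* Let $\mathbb M$ be a sequential Morse matching on a finite-type based chain complex $(\mathbf C,I)$ of real inner product spaces, and let $\mathcal M$ be its Morsification. Then $\mathbb M$ is $(n,n-1)$-free if and only if $\mathcal M$ is $(n,n-1)$-free.
   Context: Based chain complex: chain complex $(\mathbf C,\partial)$ of finite-dimensional real inner product spaces $\mathbf C_n$, $n\ge0$, with disjoint finite index sets $I_n$ and $\mathbf C_n=\bigoplus_{\alpha\in I_n}C_\alpha$; $\partial_{\beta,\alpha}=\pi_\beta\partial_n i_\alpha$. Graph: edges $\alpha\to\beta$ when $\partial_{\beta,\alpha}\ne0$. Morse matching: edge set $M$ with each cell on at most one edge, $\partial_{\beta,\alpha}$ an isomorphism for $\alpha\to\beta\in M$, and "directed path from $\alpha$ to $\beta$ in the graph with $M$ reversed" a partial order on each $I_n$; $M^0$ = unmatched cells. With $\Gamma_{\beta,\alpha}$ the sum over directed paths from $\alpha$ to $\beta$ in the reversed graph of composites of $\partial_{\sigma_{i+1},\sigma_i}$ (ordinary steps) and $-\partial_{\sigma_i,\sigma_{i+1}}^{-1}$ (reversed matched edges), the Morse complex is $\mathbf C^M_n=\bigoplus_{\alpha\in I_n\cap M^0}C_\alpha$ with boundary $\sum_{\beta\in M^0\cap I_{n-1}}\Gamma_{\beta,\alpha}$, and the Morse retraction is $\Phi^M=\sum_{\beta\in I_n}\Gamma_{\beta,\alpha}$ on critical $C_\alpha$, $\Psi^M=\sum_{\beta\in M^0\cap I_n}\Gamma_{\beta,\alpha}$ on $C_\alpha$. A sequential Morse matching $\mathbb M=(M_{(1)},\dots,M_{(k)})$: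 $M_{(1)}$ Morse matching on $(\mathbf C,I)$, $M_{(j+1)}$ Morse matching on the based complex $\mathbf C^{M_{(j)}}$; $\Phi^{\mathbb M},\Psi^{\mathbb M}$ are the composites. $\mathbb M$ is $(n,n-1)$-free if no $M_{(j)}$ pairs an $n$-cell with an $(n-1)$-cell. Morsification: $\mathbf C=\operatorname{Ker}\Psi^{\mathbb M}\oplus\operatorname{Im}\Phi^{\mathbb M}$; choose a Hodge basis of the subcomplex $\operatorname{Ker}\Psi^{\mathbb M}$ (restricted inner product, boundary $\partial'$): orthonormal bases $\mathcal R_+(\partial'_m)$ of $\operatorname{Im}\partial_m'^\dagger$, $\mathcal L_+(\partial'_m)$ of $\operatorname{Im}\partial'_m$ with bijection $v\mapsto w$, $\partial'_mv=\sigma w$, $\sigma>0$, plus a basis of the kernel of its Laplacian; base $\mathbf C$ by these one-dimensional spans together with summands of $\operatorname{Im}\Phi^{\mathbb M}$; $\mathcal M$ is the set of edges $v\to w$. $\mathcal M$ is $(n,n-1)$-free if it contains no edge $v\to w$ with $v\in\mathcal R_+(\partial'_n)$, i.e. $\mathcal R_+(\partial'_n)=\emptyset$. *)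

theory Defs
  imports "Jordan_Normal_Form.Matrix"
begin

text \<open>Each cell alpha carries the summand C_alpha = R^(cdim alpha) with the standard
 inner product (every finite-dimensional real inner product space is isometric to
 such a space); C_n is the orthogonal direct sum of the C_alpha with deg alpha = n.
 The boundary is given by its blocks bd beta alpha = pi_beta o d o i_alpha.\<close>

record 'c bcx =
  cells :: "'c set"
  deg   :: "'c \<Rightarrow> nat"
  cdim  :: "'c \<Rightarrow> nat"
  bd    :: "'c \<Rightarrow> 'c \<Rightarrow> real mat"

definition msum :: "nat \<Rightarrow> nat \<Rightarrow> ('a \<Rightarrow> real mat) \<Rightarrow> 'a set \<Rightarrow> real mat" where
  "msum nr nc f S = mat nr nc (\<lambda>ij. \<Sum>s\<in>S. f s $$ ij)"

definition vsum :: "nat \<Rightarrow> ('a \<Rightarrow> real vec) \<Rightarrow> 'a set \<Rightarrow> real vec" where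
  "vsum d f S = vec d (\<lambda>i. \<Sum>s\<in>S. f s $ i)"

definition minv :: "real mat \<Rightarrow> real mat" where
  "minv A = (SOME B. B \<in> carrier_mat (dim_col A) (dim_row A) \<and>
                     A * B = 1\<^sub>m (dim_row A) \<and> B * A = 1\<^sub>m (dim_col A))"

definition based_cx :: "'c bcx \<Rightarrow> bool" where
  "based_cx X \<longleftrightarrow> finite (cells X) \<and>
     (\<forall>\<alpha>\<in>cells X. \<forall>\<beta>\<in>cells X. bd X \<beta> \<alpha> \<in> carrier_mat (cdim X \<beta>) (cdim X \<alpha>)) \<and>
     (\<forall>\<alpha>\<in>cells X. \<forall>\<beta>\<in>cells X. deg X \<alpha> \<noteq> deg X \<beta> + 1 \<longrightarrow>
         bd X \<beta> \<alpha> = 0\<^sub>m (cdim X \<beta>) (cdim X \<alpha>)) \<and>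
     (\<forall>\<alpha>\<in>cells X. \<forall>\<gamma>\<in>cells X.
         msum (cdim X \<gamma>) (cdim X \<alpha>) (\<lambda>\<beta>. bd X \<gamma> \<beta> * bd X \<beta> \<alpha>) (cells X)
           = 0\<^sub>m (cdim X \<gamma>) (cdim X \<alpha>))"

definition edges :: "'c bcx \<Rightarrow> ('c \<times> 'c) set" where
  "edges X = {(\<alpha>, \<beta>). \<alpha> \<in> cells X \<and> \<beta> \<in> cells X \<and>
                       bd X \<beta> \<alpha> \<noteq> 0\<^sub>m (cdim X \<beta>) (cdim X \<alpha>)}"

definition redges :: "'c bcx \<Rightarrow> ('c \<times> 'c) set \<Rightarrow> ('c \<times> 'c) set" where
  "redges X M = (edges X - M) \<union> {(\<beta>, \<alpha>). (\<alpha>, \<beta>) \<in> M}"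

definition morse_matching :: "'c bcx \<Rightarrow> ('c \<times> 'c) set \<Rightarrow> bool" where
  "morse_matching X M \<longleftrightarrow> M \<subseteq> edges X \<and>
     (\<forall>(\<alpha>, \<beta>)\<in>M. \<forall>(\<alpha>', \<beta>')\<in>M. {\<alpha>, \<beta>} \<inter> {\<alpha>', \<beta>'} \<noteq> {} \<longrightarrow> (\<alpha>, \<beta>) = (\<alpha>', \<beta>')) \<and>
     (\<forall>(\<alpha>, \<beta>)\<in>M. cdim X \<alpha> = cdim X \<beta> \<and> invertible_mat (bd X \<beta> \<alpha>)) \<and>
     (\<forall>\<alpha>\<in>cells X. \<forall>\<beta>\<in>cells X. deg X \<alpha> = deg X \<beta> \<longrightarrow>
        (\<alpha>, \<beta>) \<in> (redges X M)\<^sup>* \<longrightarrow> (\<beta>, \<alpha>) \<in> (redges X M)\<^sup>* \<longrightarrow> \<alpha> = \<beta>)"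

text \<open>Directed paths from alpha to beta in the reversed graph (vertex lists; under the
 Morse condition the reversed graph is acyclic, so all paths are simple).\<close>
definition mpaths :: "'c bcx \<Rightarrow> ('c \<times> 'c) set \<Rightarrow> 'c \<Rightarrow> 'c \<Rightarrow> 'c list set" where
  "mpaths X M \<alpha> \<beta> = {p. p \<noteq> [] \<and> hd p = \<alpha> \<and> last p = \<beta> \<and> distinct p \<and>
       (\<forall>i. Suc i < length p \<longrightarrow> (p ! i, p ! Suc i) \<in> redges X M)}"

definition mstep :: "'c bcx \<Rightarrow> ('c \<times> 'c) set \<Rightarrow> 'c \<Rightarrow> 'c \<Rightarrow> real mat" where
  "mstep X M \<sigma> \<tau> = (if (\<tau>, \<sigma>) \<in> M then - minv (bd X \<sigma> \<tau>) else bd X \<tau> \<sigma>)"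

fun pweight :: "'c bcx \<Rightarrow> ('c \<times> 'c) set \<Rightarrow> 'c list \<Rightarrow> real mat" where
  "pweight X M [] = 1\<^sub>m 0"
| "pweight X M [\<sigma>] = 1\<^sub>m (cdim X \<sigma>)"
| "pweight X M (\<sigma> # \<tau> # p) = pweight X M (\<tau> # p) * mstep X M \<sigma> \<tau>"

definition Gamma :: "'c bcx \<Rightarrow> ('c \<times> 'c) set \<Rightarrow> 'c \<Rightarrow> 'c \<Rightarrow> real mat" where
  "Gamma X M \<beta> \<alpha> = msum (cdim X \<beta>) (cdim X \<alpha>) (pweight X M) (mpaths X M \<alpha> \<beta>)"

definition crit :: "'c bcx \<Rightarrow> ('c \<times> 'c) set \<Rightarrow> 'c set" where
  "crit X M = cells X - (fst ` M \<union> snd ` M)"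

definition morse_cx :: "'c bcx \<Rightarrow> ('c \<times> 'c) set \<Rightarrow> 'c bcx" where
  "morse_cx X M = X\<lparr>cells := crit X M,
      bd := (\<lambda>\<beta> \<alpha>. if deg X \<alpha> = deg X \<beta> + 1 then Gamma X M \<beta> \<alpha>
                    else 0\<^sub>m (cdim X \<beta>) (cdim X \<alpha>))\<rparr>"

fun seq_morse :: "'c bcx \<Rightarrow> ('c \<times> 'c) set list \<Rightarrow> bool" where
  "seq_morse X [] = True"
| "seq_morse X (M # Ms) = (morse_matching X M \<and> seq_morse (morse_cx X M) Ms)"

fun morse_seq :: "'c bcx \<Rightarrow> ('c \<times> 'c) set list \<Rightarrow> 'c bcx" where
  "morse_seq X [] = X"
| "morse_seq X (M # Ms) = morse_seq (morse_cx X M) Ms"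

fun seq_free :: "'c bcx \<Rightarrow> ('c \<times> 'c) set list \<Rightarrow> nat \<Rightarrow> bool" where
  "seq_free X [] n = True"
| "seq_free X (M # Ms) n =
     ((\<forall>(\<alpha>, \<beta>)\<in>M. \<not> (deg X \<alpha> = n \<and> deg X \<beta> + 1 = n)) \<and> seq_free (morse_cx X M) Ms n)"

text \<open>Chains of degree n: a vector in C_alpha for each n-cell alpha
 (and the dummy value zero_vec 0 elsewhere).\<close>
definition ncells :: "'c bcx \<Rightarrow> nat \<Rightarrow> 'c set" where
  "ncells X n = {\<alpha> \<in> cells X. deg X \<alpha> = n}"

definition chains :: "'c bcx \<Rightarrow> nat \<Rightarrow> ('c \<Rightarrow> real vec) set" where
  "chains X n = {x. \<forall>\<alpha>. if \<alpha> \<in> ncells X n then x \<alpha> \<in> carrier_vec (cdim X \<alpha>)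
                        else x \<alpha> = 0\<^sub>v 0}"

definition chain_zero :: "'c bcx \<Rightarrow> nat \<Rightarrow> 'c \<Rightarrow> real vec" where
  "chain_zero X n = (\<lambda>\<alpha>. if \<alpha> \<in> ncells X n then 0\<^sub>v (cdim X \<alpha>) else 0\<^sub>v 0)"

definition cip :: "'c bcx \<Rightarrow> nat \<Rightarrow> ('c \<Rightarrow> real vec) \<Rightarrow> ('c \<Rightarrow> real vec) \<Rightarrow> real" where
  "cip X n x y = (\<Sum>\<alpha>\<in>ncells X n. x \<alpha> \<bullet> y \<alpha>)"

text \<open>Boundary d_n : C_n -> C_(n-1) (for n = 0 all blocks vanish, so d_0 = 0).\<close>
definition bdry :: "'c bcx \<Rightarrow> nat \<Rightarrow> ('c \<Rightarrow> real vec) \<Rightarrow> 'c \<Rightarrow> real vec" where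
  "bdry X n x = (\<lambda>\<beta>. if \<beta> \<in> ncells X (n - 1)
        then vsum (cdim X \<beta>) (\<lambda>\<alpha>. bd X \<beta> \<alpha> *\<^sub>v x \<alpha>) (ncells X n) else 0\<^sub>v 0)"

definition psi :: "'c bcx \<Rightarrow> ('c \<times> 'c) set \<Rightarrow> nat \<Rightarrow> ('c \<Rightarrow> real vec) \<Rightarrow> 'c \<Rightarrow> real vec" where
  "psi X M n x = (\<lambda>\<beta>. if \<beta> \<in> crit X M \<and> deg X \<beta> = n
        then vsum (cdim X \<beta>) (\<lambda>\<alpha>. Gamma X M \<beta> \<alpha> *\<^sub>v x \<alpha>) (ncells X n) else 0\<^sub>v 0)"

fun psi_seq :: "'c bcx \<Rightarrow> ('c \<times> 'c) set list \<Rightarrow> nat \<Rightarrow> ('c \<Rightarrow> real vec) \<Rightarrow> 'c \<Rightarrow> real vec" where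
  "psi_seq X [] n x = x"
| "psi_seq X (M # Ms) n x = psi_seq (morse_cx X M) Ms n (psi X M n x)"

definition kerPsi :: "'c bcx \<Rightarrow> ('c \<times> 'c) set list \<Rightarrow> nat \<Rightarrow> ('c \<Rightarrow> real vec) set" where
  "kerPsi X Ms n = {x \<in> chains X n. psi_seq X Ms n x = chain_zero (morse_seq X Ms) n}"

text \<open>Image of the adjoint of d'_n : Ker Psi_n -> Ker Psi_(n-1), taken w.r.t. the
 restricted inner products.\<close>
definition adj_im :: "'c bcx \<Rightarrow> ('c \<times> 'c) set list \<Rightarrow> nat \<Rightarrow> ('c \<Rightarrow> real vec) set" where
  "adj_im X Ms n = {x \<in> kerPsi X Ms n. \<exists>y \<in> kerPsi X Ms (n - 1).
       \<forall>z \<in> kerPsi X Ms n. cip X (n - 1) (bdry X n z) y = cip X n z x}"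

definition lincomb :: "'c bcx \<Rightarrow> nat \<Rightarrow> (('c \<Rightarrow> real vec) \<Rightarrow> real) \<Rightarrow> ('c \<Rightarrow> real vec) set
                        \<Rightarrow> 'c \<Rightarrow> real vec" where
  "lincomb X n c R = (\<lambda>\<alpha>. if \<alpha> \<in> ncells X n
        then vsum (cdim X \<alpha>) (\<lambda>v. c v \<cdot>\<^sub>v v \<alpha>) R else 0\<^sub>v 0)"

definition orthonormal_basis :: "'c bcx \<Rightarrow> nat \<Rightarrow> ('c \<Rightarrow> real vec) set \<Rightarrow> ('c \<Rightarrow> real vec) set \<Rightarrow> bool" where
  "orthonormal_basis X n W R \<longleftrightarrow> finite R \<and> R \<subseteq> W \<and>
     (\<forall>v\<in>R. cip X n v v = 1) \<and> (\<forall>v\<in>R. \<forall>w\<in>R. v \<noteq> w \<longrightarrow> cip X n v w = 0) \<and>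
     (\<forall>w\<in>W. \<exists>c. w = lincomb X n c R)"

text \<open>R_+(d'_n) of a Morsification: an orthonormal basis of Im d'_n^dagger.
 The Morsification is (n,n-1)-free iff this set is empty.\<close>
definition Rplus :: "'c bcx \<Rightarrow> ('c \<times> 'c) set list \<Rightarrow> nat \<Rightarrow> ('c \<Rightarrow> real vec) set \<Rightarrow> bool" where
  "Rplus X Ms n R \<longleftrightarrow> orthonormal_basis X n (adj_im X Ms n) R"

definition morsification_free :: "('c \<Rightarrow> real vec) set \<Rightarrow> bool" where
  "morsification_free R \<longleftrightarrow> R = {}"

end

theory Submission
  imports Defs
begin

text \<open>Both conditions are equivalent to the vanishing of the boundary on \<open>Ker \<Psi>\<close> in degree \<open>n\<close>.
  Each \<open>\<Psi>\<^sup>M\<close> commutes with the boundary (both sides of \<open>\<Psi> \<partial> = \<partial>\<^sup>M \<Psi>\<close> satisfy the same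
  recursion along the reversed graph) and is a left inverse of the inclusion of critical chains.
  If some \<open>M\<^sub>(\<^sub>j\<^sub>)\<close> matches an \<open>n\<close>-cell \<open>\<alpha>\<close> with an \<open>(n-1)\<close>-cell, the chain concentrated on
  \<open>\<alpha>\<close> at stage \<open>j\<close>, included back into \<open>C\<close>, lies in \<open>Ker \<Psi>\<close> and has nonzero boundary. If no
  \<open>M\<^sub>(\<^sub>j\<^sub>)\<close> does, \<open>\<Psi>\<^sup>M\<close> is injective on \<open>(n-1)\<close>-cycles: at a nonzero entry minimal for the
  reversed graph the cell is matched with a lower cell, and the boundary sees the entry through an
  invertible block. Finally \<open>\<R>\<^sub>+(\<partial>'\<^sub>n)\<close> is empty iff the image of the adjoint of \<open>\<partial>'\<close> is zero,
  and representing linear functionals on the finitely spanned space \<open>Ker \<Psi>\<close> shows that this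
  happens iff \<open>\<partial>' = 0\<close>.\<close>

section \<open>Finite sums of matrices and vectors\<close>

lemma msum_carrier [simp]: "msum nr nc f S \<in> carrier_mat nr nc"
  by (simp add: msum_def)

lemma msum_dims [simp]: "dim_row (msum nr nc f S) = nr" "dim_col (msum nr nc f S) = nc"
  by (simp_all add: msum_def)

lemma msum_cong: "(\<And>s. s \<in> S \<Longrightarrow> f s = g s) \<Longrightarrow> msum nr nc f S = msum nr nc g S"
  unfolding msum_def by (intro eq_matI) auto

lemma msum_empty [simp]: "msum nr nc f {} = 0\<^sub>m nr nc"
  unfolding msum_def by (intro eq_matI) auto

lemma msum_zero: "(\<And>s. s \<in> S \<Longrightarrow> f s = 0\<^sub>m nr nc) \<Longrightarrow> msum nr nc f S = 0\<^sub>m nr nc"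
  unfolding msum_def by (intro eq_matI) auto

lemma msum_single: "f s \<in> carrier_mat nr nc \<Longrightarrow> msum nr nc f {s} = f s"
  unfolding msum_def by (intro eq_matI) auto

lemma msum_insert:
  "finite S \<Longrightarrow> s \<notin> S \<Longrightarrow> f s \<in> carrier_mat nr nc \<Longrightarrow>
   msum nr nc f (insert s S) = f s + msum nr nc f S"
  unfolding msum_def by (intro eq_matI) auto

lemma msum_remove:
  "finite S \<Longrightarrow> s \<in> S \<Longrightarrow> f s \<in> carrier_mat nr nc \<Longrightarrow> msum nr nc f S = f s + msum nr nc f (S - {s})"
  using msum_insert[of "S - {s}" s f] by (simp add: insert_absorb)

lemma msum_reindex: "inj_on h S \<Longrightarrow> msum nr nc f (h ` S) = msum nr nc (\<lambda>s. f (h s)) S"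
  unfolding msum_def by (intro eq_matI) (auto simp: sum.reindex)

lemma msum_mono_neutral:
  assumes "finite S" "T \<subseteq> S" "\<And>s. s \<in> S - T \<Longrightarrow> f s = 0\<^sub>m nr nc"
  shows "msum nr nc f S = msum nr nc f T"
  unfolding msum_def using assms by (intro eq_matI) (auto intro!: sum.mono_neutral_right)

lemma msum_single_nonzero:
  assumes "finite S" "t \<in> S" "\<And>s. s \<in> S - {t} \<Longrightarrow> f s = 0\<^sub>m nr nc" "f t \<in> carrier_mat nr nc"
  shows "msum nr nc f S = f t"
  using msum_mono_neutral[of S "{t}" f nr nc] assms msum_single[of f t nr nc] by auto

lemma msum_UN_disjoint:
  assumes "finite I" "\<And>i. i \<in> I \<Longrightarrow> finite (A i)"
    "\<And>i j. i \<in> I \<Longrightarrow> j \<in> I \<Longrightarrow> i \<noteq> j \<Longrightarrow> A i \<inter> A j = {}"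
  shows "msum nr nc f (\<Union>i\<in>I. A i) = msum nr nc (\<lambda>i. msum nr nc f (A i)) I"
  unfolding msum_def using assms by (intro eq_matI) (auto simp: sum.UNION_disjoint)

lemma msum_swap:
  "msum nr nc (\<lambda>s. msum nr nc (g s) T) S = msum nr nc (\<lambda>t. msum nr nc (\<lambda>s. g s t) S) T"
  unfolding msum_def by (intro eq_matI) (auto intro: sum.swap)

lemma scalar_prod_sum_left:
  assumes "\<And>s. s \<in> S \<Longrightarrow> dim_vec (f s) = k" "dim_vec w = k"
  shows "vec k (\<lambda>i. \<Sum>s\<in>S. f s $ i) \<bullet> w = (\<Sum>s\<in>S. f s \<bullet> w)"
  unfolding scalar_prod_def using assms by (simp add: sum_distrib_right) (rule sum.swap)

lemma scalar_prod_sum_right: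
  assumes "\<And>s. s \<in> S \<Longrightarrow> dim_vec (f s) = k" "dim_vec w = k"
  shows "w \<bullet> vec k (\<lambda>i. \<Sum>s\<in>S. f s $ i) = (\<Sum>s\<in>S. w \<bullet> f s)"
  unfolding scalar_prod_def using assms by (simp add: sum_distrib_left) (rule sum.swap)

lemma msum_mult_right:
  assumes "\<And>s. s \<in> S \<Longrightarrow> f s \<in> carrier_mat nr k" "A \<in> carrier_mat k nc"
  shows "msum nr nc (\<lambda>s. f s * A) S = msum nr k f S * A"
proof (rule eq_matI)
  fix i j assume ij: "i < dim_row (msum nr k f S * A)" "j < dim_col (msum nr k f S * A)"
  hence i: "i < nr" and j: "j < nc" using assms by auto
  have "(msum nr k f S * A) $$ (i,j) = row (msum nr k f S) i \<bullet> col A j"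
    using ij by simp
  also have "row (msum nr k f S) i = vec k (\<lambda>l. \<Sum>s\<in>S. row (f s) i $ l)"
    using i assms by (intro eq_vecI) (auto simp: msum_def intro!: sum.cong, (metis carrier_matD(1) carrier_matD(2) index_row(1) index_col)+)
  also have "\<dots> \<bullet> col A j = (\<Sum>s\<in>S. row (f s) i \<bullet> col A j)"
    using assms j by (intro scalar_prod_sum_left) auto
  also have "\<dots> = (\<Sum>s\<in>S. (f s * A) $$ (i,j))"
    using assms i j by (intro sum.cong refl) (metis carrier_matD(1) carrier_matD(2) index_mult_mat(1))
  finally show "msum nr nc (\<lambda>s. f s * A) S $$ (i, j) = (msum nr k f S * A) $$ (i, j)"
    using i j by (simp add: msum_def)
qed (use assms in auto)

lemma msum_mult_left:
  assumes "\<And>s. s \<in> S \<Longrightarrow> f s \<in> carrier_mat k nc" "A \<in> carrier_mat nr k"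
  shows "msum nr nc (\<lambda>s. A * f s) S = A * msum k nc f S"
proof (rule eq_matI)
  fix i j assume ij: "i < dim_row (A * msum k nc f S)" "j < dim_col (A * msum k nc f S)"
  hence i: "i < nr" and j: "j < nc" using assms by auto
  have "(A * msum k nc f S) $$ (i,j) = row A i \<bullet> col (msum k nc f S) j"
    using ij by simp
  also have "col (msum k nc f S) j = vec k (\<lambda>l. \<Sum>s\<in>S. col (f s) j $ l)"
    using j assms by (intro eq_vecI) (auto simp: msum_def intro!: sum.cong, (metis carrier_matD(1) carrier_matD(2) index_row(1) index_col)+)
  also have "row A i \<bullet> \<dots> = (\<Sum>s\<in>S. row A i \<bullet> col (f s) j)"
    using assms i by (intro scalar_prod_sum_right) auto
  also have "\<dots> = (\<Sum>s\<in>S. (A * f s) $$ (i,j))"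
    using assms i j by (intro sum.cong refl) (metis carrier_matD(1) carrier_matD(2) index_mult_mat(1))
  finally show "msum nr nc (\<lambda>s. A * f s) S $$ (i, j) = (A * msum k nc f S) $$ (i, j)"
    using i j by (simp add: msum_def)
qed (use assms in auto)

lemma msum_mult_msum:
  assumes A: "\<And>s. s \<in> S \<Longrightarrow> A s \<in> carrier_mat nr (k s)"
    and B: "\<And>s t. s \<in> S \<Longrightarrow> t \<in> T \<Longrightarrow> B s t \<in> carrier_mat (k s) (l t)"
    and C: "\<And>t. t \<in> T \<Longrightarrow> C t \<in> carrier_mat (l t) nc"
  shows "msum nr nc (\<lambda>s. A s * msum (k s) nc (\<lambda>t. B s t * C t) T) S
       = msum nr nc (\<lambda>t. msum nr (l t) (\<lambda>s. A s * B s t) S * C t) T"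
proof -
  have "msum nr nc (\<lambda>s. A s * msum (k s) nc (\<lambda>t. B s t * C t) T) S
      = msum nr nc (\<lambda>s. msum nr nc (\<lambda>t. A s * B s t * C t) T) S"
  proof (intro msum_cong)
    fix s assume s: "s \<in> S"
    have "A s * msum (k s) nc (\<lambda>t. B s t * C t) T = msum nr nc (\<lambda>t. A s * (B s t * C t)) T"
      using A[OF s] B[OF s] C by (intro msum_mult_left[symmetric]) (auto intro: mult_carrier_mat)
    also have "\<dots> = msum nr nc (\<lambda>t. A s * B s t * C t) T"
      using A[OF s] B[OF s] C by (intro msum_cong) (metis assoc_mult_mat)
    finally show "A s * msum (k s) nc (\<lambda>t. B s t * C t) T = msum nr nc (\<lambda>t. A s * B s t * C t) T" .
  qed
  also have "\<dots> = msum nr nc (\<lambda>t. msum nr nc (\<lambda>s. A s * B s t * C t) S) T"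
    by (rule msum_swap)
  also have "\<dots> = msum nr nc (\<lambda>t. msum nr (l t) (\<lambda>s. A s * B s t) S * C t) T"
    using A B C by (intro msum_cong msum_mult_right) (auto intro: mult_carrier_mat)
  finally show ?thesis .
qed

lemma vsum_carrier [simp]: "vsum d f S \<in> carrier_vec d"
  by (simp add: vsum_def)

lemma vsum_dim [simp]: "dim_vec (vsum d f S) = d"
  by (simp add: vsum_def)

lemma vsum_cong: "(\<And>s. s \<in> S \<Longrightarrow> f s = g s) \<Longrightarrow> vsum d f S = vsum d g S"
  unfolding vsum_def by (intro eq_vecI) auto

lemma vsum_zero: "(\<And>s. s \<in> S \<Longrightarrow> f s = 0\<^sub>v d) \<Longrightarrow> vsum d f S = 0\<^sub>v d"
  unfolding vsum_def by (intro eq_vecI) auto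

lemma vsum_single_nonzero:
  assumes "finite S" "t \<in> S" "\<And>s. s \<in> S - {t} \<Longrightarrow> f s = 0\<^sub>v d" "f t \<in> carrier_vec d"
  shows "vsum d f S = f t"
  unfolding vsum_def using assms by (intro eq_vecI) (auto simp: sum.remove)

lemma vsum_add:
  assumes "\<And>s. s \<in> S \<Longrightarrow> f s \<in> carrier_vec d" "\<And>s. s \<in> S \<Longrightarrow> g s \<in> carrier_vec d"
  shows "vsum d (\<lambda>s. f s + g s) S = vsum d f S + vsum d g S"
proof -
  have dd: "\<And>s. s \<in> S \<Longrightarrow> dim_vec (f s) = d" "\<And>s. s \<in> S \<Longrightarrow> dim_vec (g s) = d"
     using assms by auto
  show ?thesis unfolding vsum_def using dd by (intro eq_vecI) (auto simp: sum.distrib[symmetric] intro!: sum.cong)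
qed

lemma vsum_smult:
  assumes "\<And>s. s \<in> S \<Longrightarrow> f s \<in> carrier_vec d"
  shows "vsum d (\<lambda>s. c \<cdot>\<^sub>v f s) S = c \<cdot>\<^sub>v vsum d f S"
proof -
  have dd: "\<And>s. s \<in> S \<Longrightarrow> dim_vec (f s) = d"
     using assms by auto
  show ?thesis unfolding vsum_def using dd by (intro eq_vecI) (auto simp: sum_distrib_left intro!: sum.cong)
qed

lemma vsum_swap:
  "vsum d (\<lambda>s. vsum d (g s) T) S = vsum d (\<lambda>t. vsum d (\<lambda>s. g s t) S) T"
  unfolding vsum_def by (intro eq_vecI) (auto intro: sum.swap)

lemma mult_mat_vsum:
  assumes "A \<in> carrier_mat nr k" "\<And>s. s \<in> S \<Longrightarrow> f s \<in> carrier_vec k"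
  shows "A *\<^sub>v vsum k f S = vsum nr (\<lambda>s. A *\<^sub>v f s) S"
  using assms by (intro eq_vecI) (auto simp: vsum_def scalar_prod_sum_right)

lemma msum_mult_vec:
  assumes "\<And>s. s \<in> S \<Longrightarrow> f s \<in> carrier_mat nr nc" "v \<in> carrier_vec nc"
  shows "msum nr nc f S *\<^sub>v v = vsum nr (\<lambda>s. f s *\<^sub>v v) S"
proof (rule eq_vecI)
  fix i assume i: "i < dim_vec (vsum nr (\<lambda>s. f s *\<^sub>v v) S)"
  hence i': "i < nr" by simp
  have "row (msum nr nc f S) i = vec nc (\<lambda>l. \<Sum>s\<in>S. row (f s) i $ l)"
    using i' assms by (intro eq_vecI) (auto simp: msum_def intro!: sum.cong, (metis carrier_matD(1) carrier_matD(2) index_row(1) index_col)+)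
  hence "(msum nr nc f S *\<^sub>v v) $ i = vec nc (\<lambda>l. \<Sum>s\<in>S. row (f s) i $ l) \<bullet> v"
    using i' by simp
  also have "\<dots> = (\<Sum>s\<in>S. row (f s) i \<bullet> v)"
    using assms i' by (intro scalar_prod_sum_left) auto
  also have "\<dots> = (\<Sum>s\<in>S. (f s *\<^sub>v v) $ i)"
    using assms i' by (intro sum.cong refl) (metis carrier_matD(1) index_mult_mat_vec)
  finally show "(msum nr nc f S *\<^sub>v v) $ i = vsum nr (\<lambda>s. f s *\<^sub>v v) S $ i"
    using i' assms by (simp add: vsum_def)
qed (use assms in auto)

lemma vsum_mult_vec_add:
  assumes "\<And>\<alpha>. \<alpha> \<in> S \<Longrightarrow> A \<alpha> \<in> carrier_mat d (c \<alpha>)"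
    and "\<And>\<alpha>. \<alpha> \<in> S \<Longrightarrow> x \<alpha> \<in> carrier_vec (c \<alpha>)" "\<And>\<alpha>. \<alpha> \<in> S \<Longrightarrow> y \<alpha> \<in> carrier_vec (c \<alpha>)"
  shows "vsum d (\<lambda>\<alpha>. A \<alpha> *\<^sub>v (x \<alpha> + y \<alpha>)) S = vsum d (\<lambda>\<alpha>. A \<alpha> *\<^sub>v x \<alpha>) S + vsum d (\<lambda>\<alpha>. A \<alpha> *\<^sub>v y \<alpha>) S"
proof -
  have "vsum d (\<lambda>\<alpha>. A \<alpha> *\<^sub>v (x \<alpha> + y \<alpha>)) S = vsum d (\<lambda>\<alpha>. A \<alpha> *\<^sub>v x \<alpha> + A \<alpha> *\<^sub>v y \<alpha>) S"
    using assms by (intro vsum_cong) (metis mult_add_distrib_mat_vec)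
  also have "\<dots> = vsum d (\<lambda>\<alpha>. A \<alpha> *\<^sub>v x \<alpha>) S + vsum d (\<lambda>\<alpha>. A \<alpha> *\<^sub>v y \<alpha>) S"
    using assms by (intro vsum_add) (auto intro: mult_mat_vec_carrier)
  finally show ?thesis .
qed

lemma vsum_mult_vec_smult:
  assumes "\<And>\<alpha>. \<alpha> \<in> S \<Longrightarrow> A \<alpha> \<in> carrier_mat d (c \<alpha>)" "\<And>\<alpha>. \<alpha> \<in> S \<Longrightarrow> x \<alpha> \<in> carrier_vec (c \<alpha>)"
  shows "vsum d (\<lambda>\<alpha>. A \<alpha> *\<^sub>v (k \<cdot>\<^sub>v x \<alpha>)) S = k \<cdot>\<^sub>v vsum d (\<lambda>\<alpha>. A \<alpha> *\<^sub>v x \<alpha>) S"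
proof -
  have "vsum d (\<lambda>\<alpha>. A \<alpha> *\<^sub>v (k \<cdot>\<^sub>v x \<alpha>)) S = vsum d (\<lambda>\<alpha>. k \<cdot>\<^sub>v (A \<alpha> *\<^sub>v x \<alpha>)) S"
    using assms by (intro vsum_cong) (metis mult_mat_vec)
  also have "\<dots> = k \<cdot>\<^sub>v vsum d (\<lambda>\<alpha>. A \<alpha> *\<^sub>v x \<alpha>) S"
    using assms by (intro vsum_smult) (auto intro: mult_mat_vec_carrier)
  finally show ?thesis .
qed

lemma vsum_mult_vsum:
  assumes A: "\<And>\<delta>. \<delta> \<in> T \<Longrightarrow> A \<delta> \<in> carrier_mat d (k \<delta>)"
    and B: "\<And>\<delta> \<alpha>. \<delta> \<in> T \<Longrightarrow> \<alpha> \<in> S \<Longrightarrow> B \<delta> \<alpha> \<in> carrier_mat (k \<delta>) (c \<alpha>)"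
    and z: "\<And>\<alpha>. \<alpha> \<in> S \<Longrightarrow> z \<alpha> \<in> carrier_vec (c \<alpha>)"
  shows "vsum d (\<lambda>\<delta>. A \<delta> *\<^sub>v vsum (k \<delta>) (\<lambda>\<alpha>. B \<delta> \<alpha> *\<^sub>v z \<alpha>) S) T
       = vsum d (\<lambda>\<alpha>. msum d (c \<alpha>) (\<lambda>\<delta>. A \<delta> * B \<delta> \<alpha>) T *\<^sub>v z \<alpha>) S"
proof -
  have "vsum d (\<lambda>\<delta>. A \<delta> *\<^sub>v vsum (k \<delta>) (\<lambda>\<alpha>. B \<delta> \<alpha> *\<^sub>v z \<alpha>) S) T
      = vsum d (\<lambda>\<delta>. vsum d (\<lambda>\<alpha>. (A \<delta> * B \<delta> \<alpha>) *\<^sub>v z \<alpha>) S) T"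
  proof (intro vsum_cong)
    fix \<delta> assume d: "\<delta> \<in> T"
    have "A \<delta> *\<^sub>v vsum (k \<delta>) (\<lambda>\<alpha>. B \<delta> \<alpha> *\<^sub>v z \<alpha>) S = vsum d (\<lambda>\<alpha>. A \<delta> *\<^sub>v (B \<delta> \<alpha> *\<^sub>v z \<alpha>)) S"
      using A[OF d] B[OF d] z by (intro mult_mat_vsum) (auto intro!: mult_mat_vec_carrier)
    also have "\<dots> = vsum d (\<lambda>\<alpha>. (A \<delta> * B \<delta> \<alpha>) *\<^sub>v z \<alpha>) S"
      using A[OF d] B[OF d] z by (intro vsum_cong) (metis assoc_mult_mat_vec)
    finally show "A \<delta> *\<^sub>v vsum (k \<delta>) (\<lambda>\<alpha>. B \<delta> \<alpha> *\<^sub>v z \<alpha>) S = vsum d (\<lambda>\<alpha>. (A \<delta> * B \<delta> \<alpha>) *\<^sub>v z \<alpha>) S" .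
  qed
  also have "\<dots> = vsum d (\<lambda>\<alpha>. vsum d (\<lambda>\<delta>. (A \<delta> * B \<delta> \<alpha>) *\<^sub>v z \<alpha>) T) S"
    by (rule vsum_swap)
  also have "\<dots> = vsum d (\<lambda>\<alpha>. msum d (c \<alpha>) (\<lambda>\<delta>. A \<delta> * B \<delta> \<alpha>) T *\<^sub>v z \<alpha>) S"
    using A B z by (intro vsum_cong msum_mult_vec[symmetric]) (auto intro: mult_carrier_mat)
  finally show ?thesis .
qed

lemma mult_zero_vec [simp]: "A \<in> carrier_mat nr n \<Longrightarrow> A *\<^sub>v 0\<^sub>v n = 0\<^sub>v nr"
  by (intro eq_vecI) (auto simp: scalar_prod_def)

lemma zero_mult_vec [simp]: "(v :: real vec) \<in> carrier_vec nc \<Longrightarrow> 0\<^sub>m nr nc *\<^sub>v v = 0\<^sub>v nr"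
  by (intro eq_vecI) (auto simp: scalar_prod_def)

lemma vec_insert_unit:
  "i < k \<Longrightarrow> (a, i) \<notin> P \<Longrightarrow>
   vec k (\<lambda>j. if (a, j) \<in> insert (a, i) P then (w :: real vec) $ j else 0) =
   vec k (\<lambda>j. if (a, j) \<in> P then w $ j else 0) + w $ i \<cdot>\<^sub>v unit_vec k i"
  by (rule eq_vecI) auto

lemma uminus_eq_if_add_eq_zero_mat:
  fixes P :: "real mat"
  assumes "P \<in> carrier_mat nr nc" "Q \<in> carrier_mat nr nc" "P + Q = 0\<^sub>m nr nc"
  shows "Q = - P"
proof (rule eq_matI)
  fix i j assume ij: "i < dim_row (- P)" "j < dim_col (- P)"
  have ij': "i < nr" "j < nc" using ij assms by auto
  have "P $$ (i, j) + Q $$ (i, j) = (P + Q) $$ (i, j)" using ij' assms(1,2) by simp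
  also have "\<dots> = (0\<^sub>m nr nc :: real mat) $$ (i, j)" using assms(3) by simp
  also have "\<dots> = 0" using ij' by simp
  finally have "P $$ (i, j) + Q $$ (i, j) = 0" .
  thus "Q $$ (i, j) = (- P) $$ (i, j)" using ij' assms by simp
qed (use assms in auto)

lemma minv_inverse:
  assumes "invertible_mat (A :: real mat)" "A \<in> carrier_mat n n"
  shows "minv A \<in> carrier_mat n n" "A * minv A = 1\<^sub>m n" "minv A * A = 1\<^sub>m n"
proof -
  obtain B where B: "inverts_mat A B" "inverts_mat B A"
    using assms unfolding invertible_mat_def by auto
  hence "B \<in> carrier_mat n n" "A * B = 1\<^sub>m n" "B * A = 1\<^sub>m n"
    using assms unfolding inverts_mat_def
    by (metis carrier_matD index_mult_mat(2,3) index_one_mat(2,3) carrier_matI)+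
  hence "\<exists>B. B \<in> carrier_mat (dim_col A) (dim_row A) \<and> A * B = 1\<^sub>m (dim_row A) \<and> B * A = 1\<^sub>m (dim_col A)"
    using assms by auto
  from someI_ex[OF this] show "minv A \<in> carrier_mat n n" "A * minv A = 1\<^sub>m n" "minv A * A = 1\<^sub>m n"
    using assms unfolding minv_def by auto
qed

lemma invertible_mult_vec_zero:
  assumes "invertible_mat (A :: real mat)" "A \<in> carrier_mat n n" "v \<in> carrier_vec n" "A *\<^sub>v v = 0\<^sub>v n"
  shows "v = 0\<^sub>v n"
proof -
  have "v = (minv A * A) *\<^sub>v v" using minv_inverse[OF assms(1,2)] assms by simp
  also have "\<dots> = minv A *\<^sub>v (A *\<^sub>v v)" using minv_inverse[OF assms(1,2)] assms by (metis assoc_mult_mat_vec)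
  also have "\<dots> = 0\<^sub>v n" using assms minv_inverse[OF assms(1,2)] by simp
  finally show ?thesis .
qed

section \<open>Morse matchings and their path weights\<close>

locale based_complex =
  fixes X :: "'c bcx"
  assumes based: "based_cx X"
begin

lemma finite_cells: "finite (cells X)"
  using based by (simp add: based_cx_def)

lemma bd_carrier: "\<alpha> \<in> cells X \<Longrightarrow> \<beta> \<in> cells X \<Longrightarrow> bd X \<beta> \<alpha> \<in> carrier_mat (cdim X \<beta>) (cdim X \<alpha>)"
  using based by (simp add: based_cx_def)

lemma bd_zero_deg:
  "\<alpha> \<in> cells X \<Longrightarrow> \<beta> \<in> cells X \<Longrightarrow> deg X \<alpha> \<noteq> deg X \<beta> + 1 \<Longrightarrow> bd X \<beta> \<alpha> = 0\<^sub>m (cdim X \<beta>) (cdim X \<alpha>)"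
  using based by (simp add: based_cx_def)

lemma bd_bd_zero:
  "\<alpha> \<in> cells X \<Longrightarrow> \<gamma> \<in> cells X \<Longrightarrow>
   msum (cdim X \<gamma>) (cdim X \<alpha>) (\<lambda>\<beta>. bd X \<gamma> \<beta> * bd X \<beta> \<alpha>) (cells X) = 0\<^sub>m (cdim X \<gamma>) (cdim X \<alpha>)"
  using based by (simp add: based_cx_def)

lemma edgesD:
  "(a, b) \<in> edges X \<Longrightarrow>
   a \<in> cells X \<and> b \<in> cells X \<and> deg X a = deg X b + 1 \<and> bd X b a \<noteq> 0\<^sub>m (cdim X b) (cdim X a)"
  unfolding edges_def using bd_zero_deg by auto

lemma bd_zero_if_not_edge:
  "a \<in> cells X \<Longrightarrow> b \<in> cells X \<Longrightarrow> (a, b) \<notin> edges X \<Longrightarrow> bd X b a = 0\<^sub>m (cdim X b) (cdim X a)"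
  unfolding edges_def by auto

end

locale matched_complex = based_complex +
  fixes M :: "('c \<times> 'c) set"
  assumes matching: "morse_matching X M"
begin

abbreviation r where "r \<equiv> redges X M"

lemma matched_edge: "(a, b) \<in> M \<Longrightarrow> (a, b) \<in> edges X"
  using matching unfolding morse_matching_def by (elim conjE) blast

lemma matched_deg: "(a, b) \<in> M \<Longrightarrow> a \<in> cells X \<and> b \<in> cells X \<and> deg X a = deg X b + 1"
  using edgesD[OF matched_edge] by simp

lemma matched_unique:
  assumes "(a, b) \<in> M" "(a', b') \<in> M" "{a, b} \<inter> {a', b'} \<noteq> {}"
  shows "a = a' \<and> b = b'"
proof -
  have "\<forall>(\<alpha>, \<beta>)\<in>M. \<forall>(\<alpha>', \<beta>')\<in>M. {\<alpha>, \<beta>} \<inter> {\<alpha>', \<beta>'} \<noteq> {} \<longrightarrow> (\<alpha>, \<beta>) = (\<alpha>', \<beta>')"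
    using matching unfolding morse_matching_def by (elim conjE)
  with assms show ?thesis by fastforce
qed

lemma matched_unique_fst: "(a, b) \<in> M \<Longrightarrow> (a, b') \<in> M \<Longrightarrow> b = b'"
  using matched_unique[of a b a b'] by auto

lemma matched_unique_snd: "(a, b) \<in> M \<Longrightarrow> (a', b) \<in> M \<Longrightarrow> a = a'"
  using matched_unique[of a b a' b] by auto

lemma matched_upper_not_lower: "(a, b) \<in> M \<Longrightarrow> (c, a) \<notin> M"
  using matched_unique[of a b c a] matched_deg[of a b] by auto

lemma matched_iso: "(a, b) \<in> M \<Longrightarrow> cdim X a = cdim X b \<and> invertible_mat (bd X b a)"
proof -
  assume "(a, b) \<in> M"
  moreover have "\<forall>(\<alpha>, \<beta>)\<in>M. cdim X \<alpha> = cdim X \<beta> \<and> invertible_mat (bd X \<beta> \<alpha>)"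
    using matching unfolding morse_matching_def by (elim conjE)
  ultimately show ?thesis by auto
qed

lemma reach_same_deg_eq:
  "a \<in> cells X \<Longrightarrow> b \<in> cells X \<Longrightarrow> deg X a = deg X b \<Longrightarrow> (a, b) \<in> r\<^sup>* \<Longrightarrow> (b, a) \<in> r\<^sup>* \<Longrightarrow> a = b"
  using matching unfolding morse_matching_def by (elim conjE) blast

lemma redgesD:
  "(a, b) \<in> r \<Longrightarrow> a \<in> cells X \<and> b \<in> cells X \<and>
   ((a, b) \<in> edges X \<and> (a, b) \<notin> M \<and> deg X a = deg X b + 1 \<or> (b, a) \<in> M \<and> deg X b = deg X a + 1)"
  unfolding redges_def by (auto dest: edgesD matched_deg)

lemma redges_cells: "(a, b) \<in> r \<Longrightarrow> a \<in> cells X" "(a, b) \<in> r \<Longrightarrow> b \<in> cells X"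
  using redgesD by auto

lemma finite_redges: "finite r"
proof -
  have "r \<subseteq> cells X \<times> cells X" using redgesD by auto
  thus ?thesis by (rule finite_subset) (simp add: finite_cells)
qed

lemma finite_successors: "finite {g. (a, g) \<in> r}"
  using redges_cells by (blast intro: finite_subset[OF _ finite_cells])

lemma trancl_unmatched_deg_less: "(x, y) \<in> (edges X - M)\<^sup>+ \<Longrightarrow> deg X y < deg X x"
  by (induction rule: trancl_induct) (auto dest: edgesD)

lemma redges_trancl_cases:
  "(x, y) \<in> r\<^sup>+ \<Longrightarrow>
   (x, y) \<in> (edges X - M)\<^sup>+ \<or> (\<exists>u v. (x, u) \<in> r\<^sup>* \<and> (v, u) \<in> M \<and> (v, y) \<in> r\<^sup>*)"
proof (induction rule: trancl_induct)
  case (base y)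
  then show ?case unfolding redges_def by auto
next
  case (step y z)
  from step(2) consider "(y, z) \<in> edges X - M" | "(z, y) \<in> M"
    unfolding redges_def by auto
  then show ?case
  proof cases
    case 1
    from step(3) show ?thesis
    proof
      assume "(x, y) \<in> (edges X - M)\<^sup>+"
      with 1 show ?thesis by (blast intro: trancl_into_trancl)
    next
      assume "\<exists>u v. (x, u) \<in> r\<^sup>* \<and> (v, u) \<in> M \<and> (v, y) \<in> r\<^sup>*"
      with step(2) show ?thesis by (blast intro: rtrancl_into_rtrancl)
    qed
  next
    case 2
    with step(1) show ?thesis by (blast intro: trancl_into_rtrancl)
  qed
qed

text \<open>A cycle must climb a matched edge \<open>u \<rightarrow> v\<close>, since unmatched edges lower the degree;
  it leaves \<open>v\<close> by an unmatched edge to some \<open>w \<noteq> u\<close> of the degree of \<open>u\<close>, and then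
  \<open>u\<close> and \<open>w\<close> reach each other, contradicting the Morse condition.\<close>

lemma redges_trancl_irrefl: "(a, a) \<notin> r\<^sup>+"
proof
  assume aa: "(a, a) \<in> r\<^sup>+"
  have "(a, a) \<notin> (edges X - M)\<^sup>+" using trancl_unmatched_deg_less by blast
  with redges_trancl_cases[OF aa] obtain u v
    where au: "(a, u) \<in> r\<^sup>*" and vu: "(v, u) \<in> M" and va: "(v, a) \<in> r\<^sup>*"
    by blast
  have "(v, u) \<in> r\<^sup>*" using va au by auto
  moreover have "v \<noteq> u" using matched_deg[OF vu] by auto
  ultimately have "(v, u) \<in> r\<^sup>+" by (meson rtranclD)
  then obtain w where vw: "(v, w) \<in> r" and wu: "(w, u) \<in> r\<^sup>*" by (meson tranclD)
  have "(w, v) \<notin> M" using matched_upper_not_lower vu by blast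
  with redgesD[OF vw] have vw': "(v, w) \<notin> M" "deg X v = deg X w + 1" "w \<in> cells X" by auto
  have "(u, v) \<in> r" using vu unfolding redges_def by auto
  with vw have "(u, w) \<in> r\<^sup>*" by auto
  moreover have "deg X w = deg X u" using vw' matched_deg[OF vu] by auto
  ultimately have "w = u" using reach_same_deg_eq vw' wu matched_deg[OF vu] by blast
  with vw' vu show False by simp
qed

lemma acyclic_redges: "acyclic r"
  using redges_trancl_irrefl unfolding acyclic_def by blast

lemma wf_converse_redges_trancl: "wf ((r\<inverse>)\<^sup>+)"
  by (rule wf_trancl[OF finite_acyclic_wf_converse[OF finite_redges acyclic_redges]])

lemma wf_redges_trancl: "wf (r\<^sup>+)"
  by (rule wf_trancl[OF finite_acyclic_wf[OF finite_redges acyclic_redges]])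

text \<open>Only a matched edge raises the degree, and after it no second one can follow.\<close>

lemma rtrancl_redges_deg:
  assumes "(x, y) \<in> r\<^sup>*"
  shows "deg X y \<le> deg X x + 1 \<and> (deg X y = deg X x + 1 \<longrightarrow> (\<exists>z. (y, z) \<in> M))"
  using assms
proof (induction rule: rtrancl_induct)
  case (step y w)
  from redgesD[OF step(2)] consider "deg X y = deg X w + 1" | "(w, y) \<in> M" "deg X w = deg X y + 1"
    by blast
  then show ?case
  proof cases
    case 2
    have "deg X y \<noteq> deg X x + 1" using step(3) 2(1) matched_upper_not_lower by blast
    with step(3) 2 show ?thesis by auto
  qed (use step(3) in auto)
qed simp

end

lemma pweight_Cons: "q \<noteq> [] \<Longrightarrow> pweight X M (a # q) = pweight X M q * mstep X M a (hd q)"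
  by (cases q) auto

lemma mstep_unmatched: "(y, x) \<notin> M \<Longrightarrow> mstep X M x y = bd X y x"
  by (simp add: mstep_def)

lemma mstep_matched: "(y, x) \<in> M \<Longrightarrow> mstep X M x y = - minv (bd X x y)"
  by (simp add: mstep_def)

lemma Gamma_carrier [simp]: "Gamma X M b a \<in> carrier_mat (cdim X b) (cdim X a)"
  by (simp add: Gamma_def)

lemma Gamma_dims [simp]: "dim_row (Gamma X M b a) = cdim X b" "dim_col (Gamma X M b a) = cdim X a"
  by (simp_all add: Gamma_def)

context matched_complex
begin

lemma mpaths_steps: "p \<in> mpaths X M a b \<Longrightarrow> Suc i < length p \<Longrightarrow> (p!i, p!Suc i) \<in> r"
  unfolding mpaths_def by auto

lemma mpaths_nth_reach:
  assumes p: "p \<in> mpaths X M a b"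
  shows "i < length p \<Longrightarrow> (a, p!i) \<in> r\<^sup>*"
proof (induction i)
  case 0
  have "p \<noteq> []" "hd p = a" using p by (auto simp: mpaths_def)
  then show ?case by (simp add: hd_conv_nth)
next
  case (Suc i)
  then have "(a, p!i) \<in> r\<^sup>*" by simp
  moreover have "(p!i, p!Suc i) \<in> r" using mpaths_steps[OF p Suc.prems] .
  ultimately show ?case by (rule rtrancl_into_rtrancl)
qed

lemma mpaths_set_reach: "p \<in> mpaths X M a b \<Longrightarrow> x \<in> set p \<Longrightarrow> (a, x) \<in> r\<^sup>*"
  using mpaths_nth_reach by (metis in_set_conv_nth)

lemma mpaths_reach_last: "p \<in> mpaths X M a b \<Longrightarrow> (a, b) \<in> r\<^sup>*"
proof -
  assume p: "p \<in> mpaths X M a b"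
  hence "b \<in> set p" by (auto simp: mpaths_def)
  thus ?thesis using mpaths_set_reach[OF p] by blast
qed

lemma set_mpaths_subset:
  assumes p: "p \<in> mpaths X M a b"
  shows "set p \<subseteq> insert a (cells X)"
proof
  fix x assume "x \<in> set p"
  hence "(a, x) \<in> r\<^sup>*" using mpaths_set_reach[OF p] by blast
  thus "x \<in> insert a (cells X)" by (cases rule: rtranclE) (auto dest: redges_cells(2))
qed

lemma finite_mpaths: "finite (mpaths X M a b)"
proof -
  have "mpaths X M a b \<subseteq> {xs. set xs \<subseteq> insert a (cells X) \<and> distinct xs}"
    using set_mpaths_subset by (auto simp: mpaths_def)
  moreover have "finite {xs. set xs \<subseteq> insert a (cells X) \<and> distinct xs}"
    using finite_cells by (intro finite_subset_distinct) simp
  ultimately show ?thesis by (rule finite_subset)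
qed

lemma mpaths_refl: "mpaths X M a a = {[a]}"
proof
  show "{[a]} \<subseteq> mpaths X M a a" by (auto simp: mpaths_def)
next
  show "mpaths X M a a \<subseteq> {[a]}"
  proof
    fix p assume p: "p \<in> mpaths X M a a"
    hence p1: "p \<noteq> []" "hd p = a" "last p = a" "distinct p" by (auto simp: mpaths_def)
    have "length p = 1"
    proof (rule ccontr)
      assume "length p \<noteq> 1"
      hence l: "length p \<ge> 2" using p1 by (cases p) auto
      have "p ! 0 = p ! (length p - 1)" using p1 by (simp add: hd_conv_nth last_conv_nth)
      hence "0 = length p - 1" using p1(4) l nth_eq_iff_index_eq[of p 0 "length p - 1"] by fastforce
      thus False using l by simp
    qed
    thus "p \<in> {[a]}" using p1 by (cases p) auto
  qed
qed

lemma mpaths_ConsD: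
  assumes p: "x # q \<in> mpaths X M a b" and q: "q \<noteq> []"
  shows "x = a" "(a, hd q) \<in> r" "q \<in> mpaths X M (hd q) b" "a \<notin> set q"
proof -
  show xa: "x = a" using p by (simp add: mpaths_def)
  have "((x # q)!0, (x # q)! Suc 0) \<in> r" using mpaths_steps[OF p, of 0] q by simp
  thus "(a, hd q) \<in> r" using xa q by (simp add: hd_conv_nth)
  show "a \<notin> set q" using p xa by (simp add: mpaths_def)
  show "q \<in> mpaths X M (hd q) b"
    unfolding mpaths_def
  proof (intro CollectI conjI allI impI)
    show "q \<noteq> []" "hd q = hd q" using q by auto
    show "last q = b" using p q by (simp add: mpaths_def)
    show "distinct q" using p by (simp add: mpaths_def)
    fix i assume "Suc i < length q"
    thus "(q ! i, q ! Suc i) \<in> r" using mpaths_steps[OF p, of "Suc i"] by simp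
  qed
qed

text \<open>Paths are automatically simple: the reversed graph is acyclic.\<close>

lemma mpaths_ConsI:
  assumes ag: "(a, g) \<in> r" and q: "q \<in> mpaths X M g b"
  shows "a # q \<in> mpaths X M a b"
proof -
  have q1: "q \<noteq> []" "hd q = g" "last q = b" "distinct q" using q by (auto simp: mpaths_def)
  have "a \<notin> set q"
  proof
    assume "a \<in> set q"
    hence "(g, a) \<in> r\<^sup>*" using mpaths_set_reach[OF q] by blast
    hence "(a, a) \<in> r\<^sup>+" using ag by auto
    thus False using redges_trancl_irrefl by blast
  qed
  show ?thesis
    unfolding mpaths_def
  proof (intro CollectI conjI allI impI)
    show "a # q \<noteq> []" "hd (a # q) = a" by auto
    show "last (a # q) = b" using q1 by simp
    show "distinct (a # q)" using q1 \<open>a \<notin> set q\<close> by simp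
    fix i assume i: "Suc i < length (a # q)"
    show "((a # q) ! i, (a # q) ! Suc i) \<in> r"
    proof (cases i)
      case 0
      then show ?thesis using ag q1 by (simp add: hd_conv_nth)
    next
      case (Suc j)
      then show ?thesis using mpaths_steps[OF q, of j] i by simp
    qed
  qed
qed

lemma mpaths_Cons_image:
  assumes ab: "a \<noteq> b"
  shows "mpaths X M a b = (\<lambda>q. a # q) ` (\<Union>g\<in>{g. (a, g) \<in> r}. mpaths X M g b)"
proof
  show "mpaths X M a b \<subseteq> (\<lambda>q. a # q) ` (\<Union>g\<in>{g. (a, g) \<in> r}. mpaths X M g b)"
  proof
    fix p assume p: "p \<in> mpaths X M a b"
    then obtain x q where pq: "p = x # q" by (cases p) (auto simp: mpaths_def)
    have "q \<noteq> []" using p pq ab by (auto simp: mpaths_def)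
    from mpaths_ConsD[OF p[unfolded pq] this] pq
    show "p \<in> (\<lambda>q. a # q) ` (\<Union>g\<in>{g. (a, g) \<in> r}. mpaths X M g b)" by blast
  qed
qed (auto intro: mpaths_ConsI)

lemma mstep_carrier:
  assumes xy: "(x, y) \<in> r"
  shows "mstep X M x y \<in> carrier_mat (cdim X y) (cdim X x)"
proof (cases "(y, x) \<in> M")
  case True
  hence i: "cdim X y = cdim X x" "invertible_mat (bd X x y)" using matched_iso by auto
  have "bd X x y \<in> carrier_mat (cdim X x) (cdim X x)"
    using bd_carrier[of y x] redges_cells[OF xy] i by simp
  hence "minv (bd X x y) \<in> carrier_mat (cdim X x) (cdim X x)" using minv_inverse(1) i by blast
  thus ?thesis using True i by (simp add: mstep_matched)
next
  case False
  thus ?thesis using bd_carrier redgesD[OF xy] by (simp add: mstep_unmatched)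
qed

lemma pweight_carrier:
  "p \<in> mpaths X M a b \<Longrightarrow> pweight X M p \<in> carrier_mat (cdim X b) (cdim X a)"
proof (induction p arbitrary: a)
  case Nil
  then show ?case by (simp add: mpaths_def)
next
  case (Cons x q)
  show ?case
  proof (cases "q = []")
    case True
    then have "x = a" "a = b" using Cons.prems by (auto simp: mpaths_def)
    then show ?thesis using True by simp
  next
    case False
    note t = mpaths_ConsD[OF Cons.prems False]
    have "pweight X M q \<in> carrier_mat (cdim X b) (cdim X (hd q))" using Cons.IH[OF t(3)] .
    moreover have "mstep X M a (hd q) \<in> carrier_mat (cdim X (hd q)) (cdim X a)"
      using mstep_carrier[OF t(2)] .
    ultimately show ?thesis using False t(1) by (simp add: pweight_Cons)
  qed
qed

lemma Gamma_successors:
  assumes ab: "a \<noteq> b"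
  shows "Gamma X M b a = msum (cdim X b) (cdim X a) (\<lambda>g. Gamma X M b g * mstep X M a g) {g. (a, g) \<in> r}"
proof -
  let ?G = "{g. (a, g) \<in> r}"
  have "Gamma X M b a = msum (cdim X b) (cdim X a) (pweight X M) ((\<lambda>q. a # q) ` (\<Union>g\<in>?G. mpaths X M g b))"
    unfolding Gamma_def using mpaths_Cons_image[OF ab] by simp
  also have "\<dots> = msum (cdim X b) (cdim X a) (\<lambda>q. pweight X M (a # q)) (\<Union>g\<in>?G. mpaths X M g b)"
    by (rule msum_reindex) (simp add: inj_on_def)
  also have "\<dots> = msum (cdim X b) (cdim X a) (\<lambda>g. msum (cdim X b) (cdim X a) (\<lambda>q. pweight X M (a # q)) (mpaths X M g b)) ?G"
  proof (rule msum_UN_disjoint)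
    show "finite ?G" by (rule finite_successors)
    show "\<And>i. i \<in> ?G \<Longrightarrow> finite (mpaths X M i b)" by (rule finite_mpaths)
    show "\<And>i j. i \<in> ?G \<Longrightarrow> j \<in> ?G \<Longrightarrow> i \<noteq> j \<Longrightarrow> mpaths X M i b \<inter> mpaths X M j b = {}"
      by (auto simp: mpaths_def)
  qed
  also have "\<dots> = msum (cdim X b) (cdim X a) (\<lambda>g. msum (cdim X b) (cdim X a) (\<lambda>q. pweight X M q * mstep X M a g) (mpaths X M g b)) ?G"
    by (intro msum_cong) (auto simp: mpaths_def pweight_Cons)
  also have "\<dots> = msum (cdim X b) (cdim X a) (\<lambda>g. Gamma X M b g * mstep X M a g) ?G"
  proof (intro msum_cong)
    fix g assume g: "g \<in> ?G"
    show "msum (cdim X b) (cdim X a) (\<lambda>q. pweight X M q * mstep X M a g) (mpaths X M g b) = Gamma X M b g * mstep X M a g"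
      unfolding Gamma_def
      using pweight_carrier mstep_carrier g by (intro msum_mult_right) auto
  qed
  finally show ?thesis .
qed

lemma Gamma_refl: "Gamma X M a a = 1\<^sub>m (cdim X a)"
  unfolding Gamma_def mpaths_refl by (subst msum_single) auto

lemma Gamma_unreachable: "(a, b) \<notin> r\<^sup>* \<Longrightarrow> Gamma X M b a = 0\<^sub>m (cdim X b) (cdim X a)"
proof -
  assume "(a, b) \<notin> r\<^sup>*"
  hence "mpaths X M a b = {}" using mpaths_reach_last by blast
  thus ?thesis unfolding Gamma_def by simp
qed

end

section \<open>\<open>\<Psi>\<close> commutes with the boundary\<close>

text \<open>The blocks \<open>(\<Psi> \<partial>)\<^sub>\<tau>\<^sub>\<alpha>\<close> and, for \<open>deg \<alpha> = deg \<tau> + 1\<close>, \<open>(\<partial>\<^sup>M \<Psi>)\<^sub>\<tau>\<^sub>\<alpha>\<close>.\<close>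

definition Gamma_bd :: "'c bcx \<Rightarrow> ('c \<times> 'c) set \<Rightarrow> 'c \<Rightarrow> 'c \<Rightarrow> real mat" where
  "Gamma_bd X M \<tau> \<alpha> = msum (cdim X \<tau>) (cdim X \<alpha>) (\<lambda>\<delta>. Gamma X M \<tau> \<delta> * bd X \<delta> \<alpha>) (cells X)"

definition Gamma_crit_Gamma :: "'c bcx \<Rightarrow> ('c \<times> 'c) set \<Rightarrow> 'c \<Rightarrow> 'c \<Rightarrow> real mat" where
  "Gamma_crit_Gamma X M \<tau> \<alpha> = msum (cdim X \<tau>) (cdim X \<alpha>) (\<lambda>\<beta>. Gamma X M \<tau> \<beta> * Gamma X M \<beta> \<alpha>)
     {\<beta> \<in> crit X M. deg X \<beta> = deg X \<alpha>}"

lemma Gamma_bd_carrier [simp]: "Gamma_bd X M \<tau> \<alpha> \<in> carrier_mat (cdim X \<tau>) (cdim X \<alpha>)"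
  by (simp add: Gamma_bd_def)

lemma Gamma_crit_Gamma_carrier [simp]:
  "Gamma_crit_Gamma X M \<tau> \<alpha> \<in> carrier_mat (cdim X \<tau>) (cdim X \<alpha>)"
  by (simp add: Gamma_crit_Gamma_def)

context matched_complex
begin

lemma crit_iff: "x \<in> crit X M \<longleftrightarrow> x \<in> cells X \<and> (\<forall>y. (x, y) \<notin> M) \<and> (\<forall>y. (y, x) \<notin> M)"
  unfolding crit_def by force

lemma crit_cells: "x \<in> crit X M \<Longrightarrow> x \<in> cells X"
  by (simp add: crit_def)

lemma crit_not_matched: "\<beta> \<in> crit X M \<Longrightarrow> (a, b) \<in> M \<Longrightarrow> \<beta> \<noteq> a \<and> \<beta> \<noteq> b"
  using crit_iff by blast

lemma finite_crit: "finite (crit X M)"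
  using finite_cells by (simp add: crit_def)

lemma redges_from_not_lower:
  assumes "\<And>y. (y, x) \<notin> M" "(x, g) \<in> r"
  shows "(x, g) \<in> edges X \<and> (x, g) \<notin> M \<and> deg X x = deg X g + 1 \<and> mstep X M x g = bd X g x"
  using redgesD[OF assms(2)] assms(1) mstep_unmatched[OF assms(1)] by blast

lemma redges_from_lower:
  assumes "(y, x) \<in> M" "(x, g) \<in> r" "g \<noteq> y"
  shows "(x, g) \<in> edges X \<and> (x, g) \<notin> M \<and> mstep X M x g = bd X g x"
  using redgesD[OF assms(2)] assms matched_unique_snd matched_upper_not_lower mstep_unmatched
  by metis

lemma Gamma_crit_deg_Suc_zero:
  assumes "\<beta> \<in> crit X M" "deg X \<beta> = deg X x + 1"
  shows "Gamma X M \<beta> x = 0\<^sub>m (cdim X \<beta>) (cdim X x)"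
proof (rule Gamma_unreachable)
  show "(x, \<beta>) \<notin> r\<^sup>*"
    using rtrancl_redges_deg[of x \<beta>] assms crit_iff by auto
qed

lemma Gamma_not_lower:
  assumes a: "\<alpha> \<in> cells X" and ab: "\<alpha> \<noteq> b" and nl: "\<And>y. (y, \<alpha>) \<notin> M"
  shows "Gamma X M b \<alpha> =
    msum (cdim X b) (cdim X \<alpha>) (\<lambda>\<delta>. Gamma X M b \<delta> * bd X \<delta> \<alpha>) (cells X - {\<delta>. (\<alpha>, \<delta>) \<in> M})"
proof -
  let ?G = "{g. (\<alpha>, g) \<in> r}"
  have "Gamma X M b \<alpha> = msum (cdim X b) (cdim X \<alpha>) (\<lambda>g. Gamma X M b g * mstep X M \<alpha> g) ?G"
    using Gamma_successors[OF ab] .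
  also have "\<dots> = msum (cdim X b) (cdim X \<alpha>) (\<lambda>g. Gamma X M b g * bd X g \<alpha>) ?G"
    using redges_from_not_lower[OF nl] by (intro msum_cong) auto
  also have "\<dots> = msum (cdim X b) (cdim X \<alpha>) (\<lambda>\<delta>. Gamma X M b \<delta> * bd X \<delta> \<alpha>) (cells X - {\<delta>. (\<alpha>, \<delta>) \<in> M})"
  proof (rule msum_mono_neutral[symmetric])
    show "finite (cells X - {\<delta>. (\<alpha>, \<delta>) \<in> M})" using finite_cells by simp
    show "?G \<subseteq> cells X - {\<delta>. (\<alpha>, \<delta>) \<in> M}" using redges_from_not_lower[OF nl] redges_cells by blast
    fix \<delta> assume d: "\<delta> \<in> cells X - {\<delta>. (\<alpha>, \<delta>) \<in> M} - ?G"
    hence "(\<alpha>, \<delta>) \<notin> edges X" unfolding redges_def by auto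
    hence "bd X \<delta> \<alpha> = 0\<^sub>m (cdim X \<delta>) (cdim X \<alpha>)" using bd_zero_if_not_edge a d by blast
    thus "Gamma X M b \<delta> * bd X \<delta> \<alpha> = 0\<^sub>m (cdim X b) (cdim X \<alpha>)" by simp
  qed
  finally show ?thesis .
qed

lemma Gamma_eq_Gamma_bd_crit: "\<alpha> \<in> crit X M \<Longrightarrow> \<alpha> \<noteq> \<beta> \<Longrightarrow> Gamma X M \<beta> \<alpha> = Gamma_bd X M \<beta> \<alpha>"
  using Gamma_not_lower[OF crit_cells] crit_iff unfolding Gamma_bd_def by auto

lemma Gamma_lower:
  assumes yx: "(y, x) \<in> M" and xb: "x \<noteq> b"
  shows "Gamma X M b x = Gamma X M b y * mstep X M x y + Gamma_bd X M b x"
proof -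
  let ?G = "{g. (x, g) \<in> r}"
  have x: "x \<in> cells X" "y \<in> cells X" "deg X y = deg X x + 1" using matched_deg[OF yx] by auto
  have yG: "y \<in> ?G" using yx unfolding redges_def by auto
  have "Gamma X M b x = Gamma X M b y * mstep X M x y +
      msum (cdim X b) (cdim X x) (\<lambda>g. Gamma X M b g * mstep X M x g) (?G - {y})"
    unfolding Gamma_successors[OF xb] using finite_successors mstep_carrier[of x y] yG
    by (intro msum_remove) auto
  also have "msum (cdim X b) (cdim X x) (\<lambda>g. Gamma X M b g * mstep X M x g) (?G - {y})
     = msum (cdim X b) (cdim X x) (\<lambda>g. Gamma X M b g * bd X g x) (?G - {y})"
    using redges_from_lower[OF yx] by (intro msum_cong) auto
  also have "\<dots> = Gamma_bd X M b x"
    unfolding Gamma_bd_def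
  proof (rule msum_mono_neutral[symmetric])
    show "?G - {y} \<subseteq> cells X" using redges_cells by blast
    fix \<delta> assume d: "\<delta> \<in> cells X - (?G - {y})"
    have "(x, \<delta>) \<notin> edges X \<or> \<delta> = y"
      using d matched_upper_not_lower[of x \<delta> y] yx unfolding redges_def by auto
    hence "bd X \<delta> x = 0\<^sub>m (cdim X \<delta>) (cdim X x)"
      using bd_zero_if_not_edge bd_zero_deg x d by auto
    thus "Gamma X M b \<delta> * bd X \<delta> x = 0\<^sub>m (cdim X b) (cdim X x)" by simp
  qed (rule finite_cells)
  finally show ?thesis .
qed

lemma Gamma_same_deg_zero:
  assumes b: "\<beta> \<in> crit X M" and d: "deg X \<beta> = deg X \<alpha>" and ab: "\<alpha> \<noteq> \<beta>"
    and nl: "\<And>y. (y, \<alpha>) \<notin> M"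
  shows "Gamma X M \<beta> \<alpha> = 0\<^sub>m (cdim X \<beta>) (cdim X \<alpha>)"
proof -
  have "Gamma X M \<beta> \<alpha> = msum (cdim X \<beta>) (cdim X \<alpha>) (\<lambda>g. Gamma X M \<beta> g * mstep X M \<alpha> g) {g. (\<alpha>, g) \<in> r}"
    using Gamma_successors ab by blast
  also have "\<dots> = 0\<^sub>m (cdim X \<beta>) (cdim X \<alpha>)"
  proof (rule msum_zero)
    fix g assume g: "g \<in> {g. (\<alpha>, g) \<in> r}"
    hence "Gamma X M \<beta> g = 0\<^sub>m (cdim X \<beta>) (cdim X g)"
      using redges_from_not_lower[OF nl] Gamma_crit_deg_Suc_zero b d by simp
    thus "Gamma X M \<beta> g * mstep X M \<alpha> g = 0\<^sub>m (cdim X \<beta>) (cdim X \<alpha>)"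
      using mstep_carrier g by (simp add: left_mult_zero_mat)
  qed
  finally show ?thesis .
qed

lemma Gamma_crit_crit:
  "\<alpha> \<in> crit X M \<Longrightarrow> \<beta> \<in> crit X M \<Longrightarrow> deg X \<beta> = deg X \<alpha> \<Longrightarrow>
   Gamma X M \<beta> \<alpha> = (if \<alpha> = \<beta> then 1\<^sub>m (cdim X \<alpha>) else 0\<^sub>m (cdim X \<beta>) (cdim X \<alpha>))"
  using Gamma_refl Gamma_same_deg_zero crit_iff by auto

lemma Gamma_bd_same_deg_zero:
  assumes "b \<in> crit X M" "deg X b = deg X x" "x \<in> cells X"
  shows "Gamma_bd X M b x = 0\<^sub>m (cdim X b) (cdim X x)"
  unfolding Gamma_bd_def
proof (rule msum_zero)
  fix \<delta> assume d: "\<delta> \<in> cells X"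
  show "Gamma X M b \<delta> * bd X \<delta> x = 0\<^sub>m (cdim X b) (cdim X x)"
  proof (cases "deg X x = deg X \<delta> + 1")
    case True
    thus ?thesis using Gamma_crit_deg_Suc_zero assms bd_carrier d by (simp add: left_mult_zero_mat)
  next
    case False
    thus ?thesis using bd_zero_deg d assms by simp
  qed
qed

lemma Gamma_bd_eq_crit:
  assumes \<alpha>: "\<alpha> \<in> crit X M" and \<tau>: "\<tau> \<noteq> \<alpha>"
  shows "Gamma_bd X M \<tau> \<alpha> = Gamma_crit_Gamma X M \<tau> \<alpha>"
proof -
  have "Gamma_crit_Gamma X M \<tau> \<alpha> = Gamma X M \<tau> \<alpha> * Gamma X M \<alpha> \<alpha>"
    unfolding Gamma_crit_Gamma_def
  proof (rule msum_single_nonzero)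
    fix \<beta> assume "\<beta> \<in> {\<beta> \<in> crit X M. deg X \<beta> = deg X \<alpha>} - {\<alpha>}"
    thus "Gamma X M \<tau> \<beta> * Gamma X M \<beta> \<alpha> = 0\<^sub>m (cdim X \<tau>) (cdim X \<alpha>)"
      using Gamma_crit_crit \<alpha> by auto
  qed (use finite_crit \<alpha> in auto)
  thus ?thesis
    using Gamma_eq_Gamma_bd_crit[OF \<alpha>] \<tau> by (simp add: Gamma_refl right_mult_one_mat[OF Gamma_bd_carrier])
qed

lemma Gamma_upper_partner:
  assumes \<tau>: "\<tau> \<in> crit X M" and upper: "(\<alpha>, \<rho>) \<in> M" and d: "deg X \<alpha> = deg X \<tau> + 1"
  shows "Gamma X M \<tau> \<rho> * bd X \<rho> \<alpha> = - Gamma X M \<tau> \<alpha>"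
proof -
  define k where "k = cdim X \<alpha>"
  have \<rho>: "\<alpha> \<in> cells X" "\<rho> \<in> cells X" "deg X \<alpha> = deg X \<rho> + 1"
    using matched_deg[OF upper] by auto
  have iso: "cdim X \<rho> = k" "invertible_mat (bd X \<rho> \<alpha>)" using matched_iso[OF upper] k_def by auto
  have B: "bd X \<rho> \<alpha> \<in> carrier_mat k k" using bd_carrier[of \<alpha> \<rho>] \<rho> iso k_def by simp
  note inv = minv_inverse[OF iso(2) B]
  have G: "Gamma X M \<tau> \<alpha> \<in> carrier_mat (cdim X \<tau>) k" by (simp add: k_def)
  have "Gamma X M \<tau> \<rho> = Gamma X M \<tau> \<alpha> * mstep X M \<rho> \<alpha> + Gamma_bd X M \<tau> \<rho>"
    using Gamma_lower[OF upper] crit_not_matched[OF \<tau> upper] by auto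
  also have "\<dots> = Gamma X M \<tau> \<alpha> * - minv (bd X \<rho> \<alpha>) + 0\<^sub>m (cdim X \<tau>) k"
    using mstep_matched[OF upper] Gamma_bd_same_deg_zero[OF \<tau>, of \<rho>] \<rho> d iso by simp
  also have "\<dots> = - (Gamma X M \<tau> \<alpha> * minv (bd X \<rho> \<alpha>))"
    using G inv by (subst uminus_mult_right_mat) auto
  finally have "Gamma X M \<tau> \<rho> * bd X \<rho> \<alpha> = - (Gamma X M \<tau> \<alpha> * minv (bd X \<rho> \<alpha>) * bd X \<rho> \<alpha>)"
    using G inv B by simp
  also have "\<dots> = - Gamma X M \<tau> \<alpha>"
    using G inv B by (simp add: assoc_mult_mat[OF G inv(1) B] right_mult_one_mat[OF G])
  finally show ?thesis .
qed

lemma Gamma_bd_eq_upper: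
  assumes \<tau>: "\<tau> \<in> crit X M" and upper: "(\<alpha>, \<rho>) \<in> M" and d: "deg X \<alpha> = deg X \<tau> + 1"
  shows "Gamma_bd X M \<tau> \<alpha> = Gamma_crit_Gamma X M \<tau> \<alpha>"
proof -
  have \<rho>: "\<alpha> \<in> cells X" "\<rho> \<in> cells X" using matched_deg[OF upper] by auto
  have not_lower: "\<And>y. (y, \<alpha>) \<notin> M" using matched_upper_not_lower[OF upper] .
  have "{\<delta>. (\<alpha>, \<delta>) \<in> M} = {\<rho>}" using matched_unique_fst[OF upper] upper by blast
  hence rest: "Gamma X M \<tau> \<alpha> = msum (cdim X \<tau>) (cdim X \<alpha>) (\<lambda>\<delta>. Gamma X M \<tau> \<delta> * bd X \<delta> \<alpha>) (cells X - {\<rho>})"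
    using Gamma_not_lower[OF \<rho>(1) _ not_lower, of \<tau>] crit_not_matched[OF \<tau> upper] by auto
  have "Gamma_bd X M \<tau> \<alpha> = Gamma X M \<tau> \<rho> * bd X \<rho> \<alpha> +
      msum (cdim X \<tau>) (cdim X \<alpha>) (\<lambda>\<delta>. Gamma X M \<tau> \<delta> * bd X \<delta> \<alpha>) (cells X - {\<rho>})"
    unfolding Gamma_bd_def using finite_cells \<rho> bd_carrier[OF \<rho>] by (intro msum_remove) auto
  also have "\<dots> = 0\<^sub>m (cdim X \<tau>) (cdim X \<alpha>)"
    unfolding Gamma_upper_partner[OF assms] rest[symmetric] by simp
  also have "\<dots> = Gamma_crit_Gamma X M \<tau> \<alpha>"
    unfolding Gamma_crit_Gamma_def
  proof (rule msum_zero[symmetric])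
    fix \<beta> assume "\<beta> \<in> {\<beta> \<in> crit X M. deg X \<beta> = deg X \<alpha>}"
    hence "Gamma X M \<beta> \<alpha> = 0\<^sub>m (cdim X \<beta>) (cdim X \<alpha>)"
      using Gamma_same_deg_zero[OF _ _ _ not_lower] crit_not_matched[OF _ upper] by force
    thus "Gamma X M \<tau> \<beta> * Gamma X M \<beta> \<alpha> = 0\<^sub>m (cdim X \<tau>) (cdim X \<alpha>)"
      by (simp add: right_mult_zero_mat[OF Gamma_carrier])
  qed
  finally show ?thesis .
qed

lemma msum_restrict_bd_deg:
  assumes \<sigma>: "\<sigma> \<in> cells X" and S: "S \<subseteq> cells X"
    and F: "\<And>\<alpha>'. \<alpha>' \<in> S \<Longrightarrow> F \<alpha>' \<in> carrier_mat nr (cdim X \<alpha>')"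
    and G: "G \<in> carrier_mat (cdim X \<sigma>) nc"
  shows "msum nr nc (\<lambda>\<alpha>'. F \<alpha>' * (bd X \<alpha>' \<sigma> * G)) S
       = msum nr nc (\<lambda>\<alpha>'. F \<alpha>' * (bd X \<alpha>' \<sigma> * G)) (S \<inter> ncells X (deg X \<sigma> - 1))"
proof (rule msum_mono_neutral)
  show "finite S" using S finite_cells finite_subset by blast
  fix \<alpha>' assume a: "\<alpha>' \<in> S - S \<inter> ncells X (deg X \<sigma> - 1)"
  hence "bd X \<alpha>' \<sigma> = 0\<^sub>m (cdim X \<alpha>') (cdim X \<sigma>)" using bd_zero_deg \<sigma> S by (auto simp: ncells_def)
  thus "F \<alpha>' * (bd X \<alpha>' \<sigma> * G) = 0\<^sub>m nr nc" using F[of \<alpha>'] a G by (simp add: right_mult_zero_mat)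
qed auto

text \<open>For a lower cell \<open>\<alpha>\<close> with partner \<open>\<sigma>\<close>, the entries \<open>\<partial>\<^sub>\<delta>\<^sub>\<alpha>\<close> and \<open>\<Gamma>\<^sub>\<beta>\<^sub>\<alpha>\<close> (for critical \<open>\<beta>\<close>
  of the degree of \<open>\<alpha>\<close>) are combinations of their values at the other cells \<open>\<alpha>'\<close> of that
  degree, with the weights \<open>\<partial>\<^sub>\<alpha>\<^sub>'\<^sub>\<sigma> (-\<partial>\<^sub>\<alpha>\<^sub>\<sigma>\<^sup>-\<^sup>1)\<close>; for \<open>\<partial>\<close> this is \<open>\<partial>\<partial> = 0\<close> at \<open>\<sigma>\<close>.\<close>

lemma bd_lower_expand:
  assumes lower: "(\<sigma>, \<alpha>) \<in> M" and \<delta>: "\<delta> \<in> cells X"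
  shows "bd X \<delta> \<alpha> = msum (cdim X \<delta>) (cdim X \<alpha>)
           (\<lambda>\<alpha>'. bd X \<delta> \<alpha>' * (bd X \<alpha>' \<sigma> * mstep X M \<alpha> \<sigma>)) (ncells X (deg X \<alpha>) - {\<alpha>})"
proof -
  define k where "k = cdim X \<alpha>"
  define N where "N = mstep X M \<alpha> \<sigma>"
  let ?f = "\<lambda>\<alpha>'. bd X \<delta> \<alpha>' * (bd X \<alpha>' \<sigma> * N)"
  have \<sigma>: "\<sigma> \<in> cells X" "\<alpha> \<in> cells X" "deg X \<sigma> = deg X \<alpha> + 1" using matched_deg[OF lower] by auto
  have iso: "cdim X \<sigma> = k" "invertible_mat (bd X \<alpha> \<sigma>)" using matched_iso[OF lower] k_def by auto
  have B: "bd X \<alpha> \<sigma> \<in> carrier_mat k k" using bd_carrier[of \<sigma> \<alpha>] \<sigma> iso k_def by simp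
  note inv = minv_inverse[OF iso(2) B]
  have N: "N \<in> carrier_mat k k" "bd X \<alpha> \<sigma> * N = - 1\<^sub>m k"
    using inv B mstep_matched[OF lower] unfolding N_def by (auto simp: uminus_mult_right_mat)
  have \<delta>\<alpha>: "bd X \<delta> \<alpha> \<in> carrier_mat (cdim X \<delta>) k" using bd_carrier \<sigma> \<delta> k_def by simp
  have N': "N \<in> carrier_mat (cdim X \<sigma>) k" using N iso by simp
  have "msum (cdim X \<delta>) k ?f (cells X) = msum (cdim X \<delta>) k (\<lambda>\<alpha>'. bd X \<delta> \<alpha>' * bd X \<alpha>' \<sigma> * N) (cells X)"
    using assoc_mult_mat[OF bd_carrier bd_carrier N'] \<sigma> \<delta> by (intro msum_cong) simp
  also have "\<dots> = msum (cdim X \<delta>) (cdim X \<sigma>) (\<lambda>\<alpha>'. bd X \<delta> \<alpha>' * bd X \<alpha>' \<sigma>) (cells X) * N"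
    using mult_carrier_mat[OF bd_carrier bd_carrier] \<sigma> \<delta> N' by (intro msum_mult_right) auto
  also have "\<dots> = 0\<^sub>m (cdim X \<delta>) k" using bd_bd_zero[OF \<sigma>(1) \<delta>] iso N by simp
  finally have "msum (cdim X \<delta>) k ?f (cells X) = 0\<^sub>m (cdim X \<delta>) k" .
  moreover have "msum (cdim X \<delta>) k ?f (cells X) = msum (cdim X \<delta>) k ?f (ncells X (deg X \<alpha>))"
    using msum_restrict_bd_deg[OF \<sigma>(1) subset_refl, of "bd X \<delta>"] bd_carrier \<delta> N iso \<sigma>
    by (simp add: ncells_def Int_absorb1)
  moreover have "msum (cdim X \<delta>) k ?f (ncells X (deg X \<alpha>))
      = ?f \<alpha> + msum (cdim X \<delta>) k ?f (ncells X (deg X \<alpha>) - {\<alpha>})"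
    using \<sigma> finite_cells \<delta>\<alpha> B N by (intro msum_remove) (auto simp: ncells_def)
  moreover have "?f \<alpha> = - bd X \<delta> \<alpha>" using N \<delta>\<alpha> by (simp add: uminus_mult_right_mat)
  ultimately have "- bd X \<delta> \<alpha> + msum (cdim X \<delta>) k ?f (ncells X (deg X \<alpha>) - {\<alpha>}) = 0\<^sub>m (cdim X \<delta>) k"
    by simp
  from uminus_eq_if_add_eq_zero_mat[OF uminus_carrier_mat[OF \<delta>\<alpha>] msum_carrier this]
  show ?thesis unfolding N_def k_def by simp
qed

lemma Gamma_lower_expand:
  assumes lower: "(\<sigma>, \<alpha>) \<in> M" and \<beta>: "\<beta> \<in> crit X M" "deg X \<beta> = deg X \<alpha>"
  shows "Gamma X M \<beta> \<alpha> = msum (cdim X \<beta>) (cdim X \<alpha>)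
           (\<lambda>\<alpha>'. Gamma X M \<beta> \<alpha>' * (bd X \<alpha>' \<sigma> * mstep X M \<alpha> \<sigma>)) (ncells X (deg X \<alpha>) - {\<alpha>})"
proof -
  define N where "N = mstep X M \<alpha> \<sigma>"
  have \<sigma>: "\<sigma> \<in> cells X" "\<alpha> \<in> cells X" "deg X \<sigma> = deg X \<alpha> + 1" using matched_deg[OF lower] by auto
  have ne: "\<alpha> \<noteq> \<beta>" "\<sigma> \<noteq> \<beta>" using crit_not_matched[OF \<beta>(1) lower] by auto
  have N: "N \<in> carrier_mat (cdim X \<sigma>) (cdim X \<alpha>)"
    using mstep_carrier[of \<alpha> \<sigma>] lower unfolding N_def redges_def by auto
  have "{\<delta>. (\<sigma>, \<delta>) \<in> M} = {\<alpha>}" using matched_unique_fst[OF lower] lower by blast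
  hence "Gamma X M \<beta> \<sigma> = msum (cdim X \<beta>) (cdim X \<sigma>) (\<lambda>\<alpha>'. Gamma X M \<beta> \<alpha>' * bd X \<alpha>' \<sigma>) (cells X - {\<alpha>})"
    using Gamma_not_lower[OF \<sigma>(1) ne(2) matched_upper_not_lower[OF lower]] by simp
  have "Gamma X M \<beta> \<alpha> = Gamma X M \<beta> \<sigma> * N"
    using Gamma_lower[OF lower ne(1)] Gamma_bd_same_deg_zero[OF \<beta>] \<sigma> mult_carrier_mat[OF Gamma_carrier N]
    unfolding N_def by simp
  also have "\<dots> = msum (cdim X \<beta>) (cdim X \<alpha>) (\<lambda>\<alpha>'. Gamma X M \<beta> \<alpha>' * bd X \<alpha>' \<sigma> * N) (cells X - {\<alpha>})"
    unfolding \<open>Gamma X M \<beta> \<sigma> = _\<close>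
    using mult_carrier_mat[OF Gamma_carrier bd_carrier] \<sigma> N by (intro msum_mult_right[symmetric]) auto
  also have "\<dots> = msum (cdim X \<beta>) (cdim X \<alpha>) (\<lambda>\<alpha>'. Gamma X M \<beta> \<alpha>' * (bd X \<alpha>' \<sigma> * N)) (cells X - {\<alpha>})"
    using assoc_mult_mat[OF Gamma_carrier bd_carrier N] \<sigma> by (intro msum_cong) simp
  also have "\<dots> = msum (cdim X \<beta>) (cdim X \<alpha>) (\<lambda>\<alpha>'. Gamma X M \<beta> \<alpha>' * (bd X \<alpha>' \<sigma> * N)) (ncells X (deg X \<alpha>) - {\<alpha>})"
    using msum_restrict_bd_deg[OF \<sigma>(1), of "cells X - {\<alpha>}" "Gamma X M \<beta>"] N \<sigma>
    by (auto simp: ncells_def Int_Diff intro!: arg_cong[where f = "msum _ _ _"])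
  finally show ?thesis unfolding N_def .
qed

lemma Gamma_bd_lower_expand:
  assumes lower: "(\<sigma>, \<alpha>) \<in> M"
  shows "Gamma_bd X M \<tau> \<alpha> = msum (cdim X \<tau>) (cdim X \<alpha>)
           (\<lambda>\<alpha>'. Gamma_bd X M \<tau> \<alpha>' * (bd X \<alpha>' \<sigma> * mstep X M \<alpha> \<sigma>)) (ncells X (deg X \<alpha>) - {\<alpha>})"
proof -
  have \<sigma>: "\<sigma> \<in> cells X" "\<alpha> \<in> cells X" using matched_deg[OF lower] by auto
  have N: "mstep X M \<alpha> \<sigma> \<in> carrier_mat (cdim X \<sigma>) (cdim X \<alpha>)"
    using mstep_carrier[of \<alpha> \<sigma>] lower unfolding redges_def by auto
  have "Gamma_bd X M \<tau> \<alpha> = msum (cdim X \<tau>) (cdim X \<alpha>) (\<lambda>\<delta>. Gamma X M \<tau> \<delta> *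
      msum (cdim X \<delta>) (cdim X \<alpha>) (\<lambda>\<alpha>'. bd X \<delta> \<alpha>' * (bd X \<alpha>' \<sigma> * mstep X M \<alpha> \<sigma>))
        (ncells X (deg X \<alpha>) - {\<alpha>})) (cells X)"
    unfolding Gamma_bd_def using bd_lower_expand[OF lower] by (intro msum_cong) simp
  also have "\<dots> = msum (cdim X \<tau>) (cdim X \<alpha>)
      (\<lambda>\<alpha>'. Gamma_bd X M \<tau> \<alpha>' * (bd X \<alpha>' \<sigma> * mstep X M \<alpha> \<sigma>)) (ncells X (deg X \<alpha>) - {\<alpha>})"
    unfolding Gamma_bd_def
    using bd_carrier mult_carrier_mat[OF bd_carrier N] \<sigma> by (intro msum_mult_msum) (auto simp: ncells_def)
  finally show ?thesis .
qed

lemma Gamma_crit_Gamma_lower_expand: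
  assumes lower: "(\<sigma>, \<alpha>) \<in> M"
  shows "Gamma_crit_Gamma X M \<tau> \<alpha> = msum (cdim X \<tau>) (cdim X \<alpha>)
           (\<lambda>\<alpha>'. Gamma_crit_Gamma X M \<tau> \<alpha>' * (bd X \<alpha>' \<sigma> * mstep X M \<alpha> \<sigma>)) (ncells X (deg X \<alpha>) - {\<alpha>})"
proof -
  let ?C = "{\<beta> \<in> crit X M. deg X \<beta> = deg X \<alpha>}"
  have \<sigma>: "\<sigma> \<in> cells X" using matched_deg[OF lower] by auto
  have N: "mstep X M \<alpha> \<sigma> \<in> carrier_mat (cdim X \<sigma>) (cdim X \<alpha>)"
    using mstep_carrier[of \<alpha> \<sigma>] lower unfolding redges_def by auto
  have "Gamma_crit_Gamma X M \<tau> \<alpha> = msum (cdim X \<tau>) (cdim X \<alpha>) (\<lambda>\<beta>. Gamma X M \<tau> \<beta> *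
      msum (cdim X \<beta>) (cdim X \<alpha>) (\<lambda>\<alpha>'. Gamma X M \<beta> \<alpha>' * (bd X \<alpha>' \<sigma> * mstep X M \<alpha> \<sigma>))
        (ncells X (deg X \<alpha>) - {\<alpha>})) ?C"
    unfolding Gamma_crit_Gamma_def using Gamma_lower_expand[OF lower] by (intro msum_cong) simp
  also have "\<dots> = msum (cdim X \<tau>) (cdim X \<alpha>)
      (\<lambda>\<alpha>'. msum (cdim X \<tau>) (cdim X \<alpha>') (\<lambda>\<beta>. Gamma X M \<tau> \<beta> * Gamma X M \<beta> \<alpha>') ?C *
        (bd X \<alpha>' \<sigma> * mstep X M \<alpha> \<sigma>)) (ncells X (deg X \<alpha>) - {\<alpha>})"
    using mult_carrier_mat[OF bd_carrier N] \<sigma> by (intro msum_mult_msum) (auto simp: ncells_def)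
  also have "\<dots> = msum (cdim X \<tau>) (cdim X \<alpha>)
      (\<lambda>\<alpha>'. Gamma_crit_Gamma X M \<tau> \<alpha>' * (bd X \<alpha>' \<sigma> * mstep X M \<alpha> \<sigma>)) (ncells X (deg X \<alpha>) - {\<alpha>})"
    unfolding Gamma_crit_Gamma_def by (intro msum_cong) (simp add: ncells_def)
  finally show ?thesis .
qed

text \<open>Induction along the reversed graph, whose transitive closure is well-founded; in the
  lower case both sides satisfy the same expansion over the cells \<open>\<alpha>'\<close> reached from \<open>\<alpha>\<close>
  through its partner \<open>\<sigma>\<close>.\<close>

lemma Gamma_bd_eq_Gamma_crit_Gamma:
  assumes \<tau>: "\<tau> \<in> crit X M"
  shows "\<alpha> \<in> cells X \<Longrightarrow> deg X \<alpha> = deg X \<tau> + 1 \<Longrightarrow> Gamma_bd X M \<tau> \<alpha> = Gamma_crit_Gamma X M \<tau> \<alpha>"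
proof (induction \<alpha> rule: wf_induct[OF wf_converse_redges_trancl])
  case (1 \<alpha>)
  consider "\<alpha> \<in> crit X M" | \<rho> where "(\<alpha>, \<rho>) \<in> M" | \<sigma> where "(\<sigma>, \<alpha>) \<in> M"
    using "1.prems"(1) crit_iff by blast
  then show ?case
  proof cases
    case 1
    with "1.prems" show ?thesis using Gamma_bd_eq_crit by force
  next
    case 2
    with "1.prems" show ?thesis using Gamma_bd_eq_upper[OF \<tau>] by blast
  next
    case (3 \<sigma>)
    have \<sigma>: "\<sigma> \<in> cells X" "deg X \<sigma> = deg X \<alpha> + 1" using matched_deg[OF 3] by auto
    have N: "mstep X M \<alpha> \<sigma> \<in> carrier_mat (cdim X \<sigma>) (cdim X \<alpha>)"
      using mstep_carrier[of \<alpha> \<sigma>] 3 unfolding redges_def by auto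
    show ?thesis
      unfolding Gamma_bd_lower_expand[OF 3] Gamma_crit_Gamma_lower_expand[OF 3]
    proof (intro msum_cong)
      fix \<alpha>' assume a': "\<alpha>' \<in> ncells X (deg X \<alpha>) - {\<alpha>}"
      show "Gamma_bd X M \<tau> \<alpha>' * (bd X \<alpha>' \<sigma> * mstep X M \<alpha> \<sigma>) =
            Gamma_crit_Gamma X M \<tau> \<alpha>' * (bd X \<alpha>' \<sigma> * mstep X M \<alpha> \<sigma>)"
      proof (cases "bd X \<alpha>' \<sigma> = 0\<^sub>m (cdim X \<alpha>') (cdim X \<sigma>)")
        case False
        hence "(\<sigma>, \<alpha>') \<in> edges X" using \<sigma> a' unfolding edges_def ncells_def by auto
        moreover have "(\<sigma>, \<alpha>') \<notin> M" using matched_unique_fst[OF 3] a' by blast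
        ultimately have "(\<sigma>, \<alpha>') \<in> r" unfolding redges_def by blast
        moreover have "(\<alpha>, \<sigma>) \<in> r" using 3 unfolding redges_def by blast
        ultimately have "(\<alpha>, \<alpha>') \<in> r\<^sup>+" by auto
        hence "(\<alpha>', \<alpha>) \<in> (r\<inverse>)\<^sup>+" by (simp add: trancl_converse)
        thus ?thesis using "1.IH" a' "1.prems"(2) by (simp add: ncells_def)
      qed (use N in \<open>simp add: right_mult_zero_mat[OF Gamma_bd_carrier]
                        right_mult_zero_mat[OF Gamma_crit_Gamma_carrier]\<close>)
    qed
  qed
qed

end

lemma morse_cx_simps [simp]:
  "cells (morse_cx X M) = crit X M" "deg (morse_cx X M) = deg X" "cdim (morse_cx X M) = cdim X"
  "bd (morse_cx X M) \<beta> \<alpha> =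
     (if deg X \<alpha> = deg X \<beta> + 1 then Gamma X M \<beta> \<alpha> else 0\<^sub>m (cdim X \<beta>) (cdim X \<alpha>))"
  by (simp_all add: morse_cx_def)

context matched_complex
begin

text \<open>Writing \<open>\<Gamma>\<^sub>\<beta>\<^sub>\<alpha> = (\<Psi> \<partial>)\<^sub>\<beta>\<^sub>\<alpha>\<close> for critical \<open>\<alpha>\<close> and then using \<open>\<partial>\<^sup>M \<Psi> = \<Psi> \<partial>\<close> reduces the
  claim to \<open>\<partial> \<partial> = 0\<close>.\<close>

lemma morse_bd_bd_zero:
  assumes \<alpha>: "\<alpha> \<in> crit X M" and \<gamma>: "\<gamma> \<in> crit X M" and d: "deg X \<alpha> = deg X \<gamma> + 2"
  shows "msum (cdim X \<gamma>) (cdim X \<alpha>) (\<lambda>\<beta>. Gamma X M \<gamma> \<beta> * Gamma X M \<beta> \<alpha>)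
           {\<beta> \<in> crit X M. deg X \<beta> = deg X \<gamma> + 1} = 0\<^sub>m (cdim X \<gamma>) (cdim X \<alpha>)"
    (is "msum _ _ _ ?C = _")
proof -
  have \<alpha>c: "\<alpha> \<in> cells X" using \<alpha> crit_cells by blast
  have "msum (cdim X \<gamma>) (cdim X \<alpha>) (\<lambda>\<beta>. Gamma X M \<gamma> \<beta> * Gamma X M \<beta> \<alpha>) ?C
      = msum (cdim X \<gamma>) (cdim X \<alpha>) (\<lambda>\<beta>. Gamma X M \<gamma> \<beta> *
          msum (cdim X \<beta>) (cdim X \<alpha>) (\<lambda>\<delta>. Gamma X M \<beta> \<delta> * bd X \<delta> \<alpha>) (cells X)) ?C"
  proof (intro msum_cong)
    fix \<beta> assume "\<beta> \<in> ?C"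
    hence "\<alpha> \<noteq> \<beta>" using d by auto
    thus "Gamma X M \<gamma> \<beta> * Gamma X M \<beta> \<alpha> =
          Gamma X M \<gamma> \<beta> * msum (cdim X \<beta>) (cdim X \<alpha>) (\<lambda>\<delta>. Gamma X M \<beta> \<delta> * bd X \<delta> \<alpha>) (cells X)"
      using Gamma_eq_Gamma_bd_crit[OF \<alpha>] unfolding Gamma_bd_def by simp
  qed
  also have "\<dots> = msum (cdim X \<gamma>) (cdim X \<alpha>) (\<lambda>\<delta>. msum (cdim X \<gamma>) (cdim X \<delta>)
      (\<lambda>\<beta>. Gamma X M \<gamma> \<beta> * Gamma X M \<beta> \<delta>) ?C * bd X \<delta> \<alpha>) (cells X)"
    using bd_carrier \<alpha>c by (intro msum_mult_msum) auto
  also have "\<dots> = msum (cdim X \<gamma>) (cdim X \<alpha>) (\<lambda>\<delta>. Gamma_bd X M \<gamma> \<delta> * bd X \<delta> \<alpha>) (cells X)"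
  proof (intro msum_cong)
    fix \<delta> assume \<delta>: "\<delta> \<in> cells X"
    show "msum (cdim X \<gamma>) (cdim X \<delta>) (\<lambda>\<beta>. Gamma X M \<gamma> \<beta> * Gamma X M \<beta> \<delta>) ?C * bd X \<delta> \<alpha> =
          Gamma_bd X M \<gamma> \<delta> * bd X \<delta> \<alpha>"
    proof (cases "deg X \<alpha> = deg X \<delta> + 1")
      case True
      thus ?thesis
        using Gamma_bd_eq_Gamma_crit_Gamma[OF \<gamma> \<delta>] d unfolding Gamma_crit_Gamma_def by simp
    next
      case False
      thus ?thesis using bd_zero_deg \<alpha>c \<delta> by (simp add: right_mult_zero_mat[OF Gamma_bd_carrier])
    qed
  qed
  also have "\<dots> = msum (cdim X \<gamma>) (cdim X \<alpha>) (\<lambda>\<epsilon>. Gamma X M \<gamma> \<epsilon> *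
      msum (cdim X \<epsilon>) (cdim X \<alpha>) (\<lambda>\<delta>. bd X \<epsilon> \<delta> * bd X \<delta> \<alpha>) (cells X)) (cells X)"
    unfolding Gamma_bd_def using bd_carrier \<alpha>c by (intro msum_mult_msum[symmetric]) auto
  also have "\<dots> = 0\<^sub>m (cdim X \<gamma>) (cdim X \<alpha>)"
    using bd_bd_zero[OF \<alpha>c] by (intro msum_zero) simp
  finally show ?thesis .
qed

lemma based_morse_cx: "based_cx (morse_cx X M)"
  unfolding based_cx_def morse_cx_simps
proof (intro conjI ballI impI)
  show "finite (crit X M)" by (rule finite_crit)
next
  fix \<alpha> \<gamma> assume \<alpha>: "\<alpha> \<in> crit X M" and \<gamma>: "\<gamma> \<in> crit X M"
  let ?f = "\<lambda>\<beta>. (if deg X \<beta> = deg X \<gamma> + 1 then Gamma X M \<gamma> \<beta> else 0\<^sub>m (cdim X \<gamma>) (cdim X \<beta>)) *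
      (if deg X \<alpha> = deg X \<beta> + 1 then Gamma X M \<beta> \<alpha> else 0\<^sub>m (cdim X \<beta>) (cdim X \<alpha>))"
  show "msum (cdim X \<gamma>) (cdim X \<alpha>) ?f (crit X M) = 0\<^sub>m (cdim X \<gamma>) (cdim X \<alpha>)"
  proof (cases "deg X \<alpha> = deg X \<gamma> + 2")
    case True
    have "msum (cdim X \<gamma>) (cdim X \<alpha>) ?f (crit X M)
        = msum (cdim X \<gamma>) (cdim X \<alpha>) ?f {\<beta> \<in> crit X M. deg X \<beta> = deg X \<gamma> + 1}"
      by (rule msum_mono_neutral) (use finite_crit in auto)
    also have "\<dots> = msum (cdim X \<gamma>) (cdim X \<alpha>) (\<lambda>\<beta>. Gamma X M \<gamma> \<beta> * Gamma X M \<beta> \<alpha>)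
        {\<beta> \<in> crit X M. deg X \<beta> = deg X \<gamma> + 1}"
      using True by (intro msum_cong) auto
    also have "\<dots> = 0\<^sub>m (cdim X \<gamma>) (cdim X \<alpha>)" using morse_bd_bd_zero[OF \<alpha> \<gamma> True] .
    finally show ?thesis .
  next
    case False
    thus ?thesis by (intro msum_zero) auto
  qed
qed auto

end

lemma based_complex_morse_cx: "matched_complex X M \<Longrightarrow> based_complex (morse_cx X M)"
  using matched_complex.based_morse_cx unfolding based_complex_def by blast

section \<open>Chains\<close>

definition chain_add :: "('c \<Rightarrow> real vec) \<Rightarrow> ('c \<Rightarrow> real vec) \<Rightarrow> 'c \<Rightarrow> real vec" where
  "chain_add x y = (\<lambda>a. x a + y a)"

definition chain_smult :: "real \<Rightarrow> ('c \<Rightarrow> real vec) \<Rightarrow> 'c \<Rightarrow> real vec" where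
  "chain_smult c x = (\<lambda>a. c \<cdot>\<^sub>v x a)"

lemma smult_vec_zero [simp]: "c \<cdot>\<^sub>v (0\<^sub>v d :: real vec) = 0\<^sub>v d"
  by (intro eq_vecI) auto

text \<open>The simplifier rewrites \<open>0\<^sub>v 0\<close>, the value of a chain off its degree, to \<open>vNil\<close>.\<close>

lemma vNil_simps [simp]: "c \<cdot>\<^sub>v (vNil :: real vec) = vNil" "(vNil :: real vec) + vNil = vNil"
  by (intro eq_vecI; auto)+

lemma chainsD: "x \<in> chains X n \<Longrightarrow> \<alpha> \<in> ncells X n \<Longrightarrow> x \<alpha> \<in> carrier_vec (cdim X \<alpha>)"
  unfolding chains_def by (metis (mono_tags, lifting) mem_Collect_eq)

lemma chainsD_outside: "x \<in> chains X n \<Longrightarrow> \<alpha> \<notin> ncells X n \<Longrightarrow> x \<alpha> = 0\<^sub>v 0"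
  unfolding chains_def by (metis (mono_tags, lifting) mem_Collect_eq)

lemma chainsI:
  "(\<And>\<alpha>. \<alpha> \<in> ncells X n \<Longrightarrow> x \<alpha> \<in> carrier_vec (cdim X \<alpha>)) \<Longrightarrow>
   (\<And>\<alpha>. \<alpha> \<notin> ncells X n \<Longrightarrow> x \<alpha> = 0\<^sub>v 0) \<Longrightarrow> x \<in> chains X n"
  unfolding chains_def by auto

lemma chain_eqI:
  assumes "x \<in> chains X n" "y \<in> chains X n" "\<And>\<alpha>. \<alpha> \<in> ncells X n \<Longrightarrow> x \<alpha> = y \<alpha>"
  shows "x = y"
proof
  fix a show "x a = y a"
    using assms chainsD_outside[of x X n a] chainsD_outside[of y X n a] by (cases "a \<in> ncells X n") auto
qed

lemma chain_eq_entryI: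
  assumes x: "x \<in> chains X n" and y: "y \<in> chains X n"
    and e: "\<And>\<alpha> i. \<alpha> \<in> ncells X n \<Longrightarrow> i < cdim X \<alpha> \<Longrightarrow> x \<alpha> $ i = y \<alpha> $ i"
  shows "x = y"
proof (rule chain_eqI[OF x y])
  fix \<alpha> assume a: "\<alpha> \<in> ncells X n"
  have "dim_vec (x \<alpha>) = cdim X \<alpha>" "dim_vec (y \<alpha>) = cdim X \<alpha>"
    using chainsD[OF x a] chainsD[OF y a] by auto
  thus "x \<alpha> = y \<alpha>" using e[OF a] by (intro eq_vecI) auto
qed

lemma chain_zero_chains [simp]: "chain_zero X n \<in> chains X n"
  unfolding chain_zero_def by (rule chainsI) auto

lemma chain_add_chains [simp]:
  assumes x: "x \<in> chains X n" and y: "y \<in> chains X n"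
  shows "chain_add x y \<in> chains X n"
  unfolding chain_add_def
proof (rule chainsI)
  fix a assume a: "a \<in> ncells X n"
  show "x a + y a \<in> carrier_vec (cdim X a)" using chainsD[OF x a] chainsD[OF y a] by simp
next
  fix a assume a: "a \<notin> ncells X n"
  show "x a + y a = 0\<^sub>v 0" using chainsD_outside[OF x a] chainsD_outside[OF y a] by simp
qed

lemma chain_smult_chains [simp]:
  assumes x: "x \<in> chains X n"
  shows "chain_smult c x \<in> chains X n"
  unfolding chain_smult_def
proof (rule chainsI)
  fix a assume a: "a \<in> ncells X n"
  show "c \<cdot>\<^sub>v x a \<in> carrier_vec (cdim X a)" using chainsD[OF x a] by simp
next
  fix a assume a: "a \<notin> ncells X n"
  show "c \<cdot>\<^sub>v x a = 0\<^sub>v 0" using chainsD_outside[OF x a] by simp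
qed

lemma chain_entry_simps:
  "x \<in> chains X n \<Longrightarrow> \<alpha> \<in> ncells X n \<Longrightarrow> dim_vec (x \<alpha>) = cdim X \<alpha>"
  "dim_vec (chain_add x y \<alpha>) = dim_vec (y \<alpha>)"
  "dim_vec (chain_smult c x \<alpha>) = dim_vec (x \<alpha>)"
  "\<alpha> \<in> ncells X n \<Longrightarrow> dim_vec (chain_zero X n \<alpha>) = cdim X \<alpha>"
  "i < dim_vec (y \<alpha>) \<Longrightarrow> chain_add x y \<alpha> $ i = x \<alpha> $ i + y \<alpha> $ i"
  "i < dim_vec (x \<alpha>) \<Longrightarrow> chain_smult c x \<alpha> $ i = c * x \<alpha> $ i"
  "\<alpha> \<in> ncells X n \<Longrightarrow> i < cdim X \<alpha> \<Longrightarrow> chain_zero X n \<alpha> $ i = 0"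
  by (simp_all add: chain_add_def chain_smult_def chain_zero_def chainsD[THEN carrier_vecD])

lemma chain_add_zero [simp]: "chain_add (chain_zero X n) (chain_zero X n) = chain_zero X n"
  by (auto simp: chain_add_def chain_zero_def)

lemma chain_smult_zero [simp]: "chain_smult c (chain_zero X n) = chain_zero X n"
  by (auto simp: chain_smult_def chain_zero_def)

lemma chain_add_zero_right:
  assumes "z \<in> chains X n"
  shows "chain_add z (chain_zero X n) = z"
  using assms
  by (intro chain_eqI[OF chain_add_chains[OF assms chain_zero_chains] assms])
     (auto simp: chain_add_def chain_zero_def dest: chainsD)

lemma chain_add_neg_self:
  assumes "z \<in> chains X n"
  shows "chain_add z (chain_smult (-1) z) = chain_zero X n"
proof (rule chain_eqI[OF chain_add_chains[OF assms chain_smult_chains[OF assms]] chain_zero_chains])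
  fix \<alpha> assume a: "\<alpha> \<in> ncells X n"
  thus "chain_add z (chain_smult (-1) z) \<alpha> = chain_zero X n \<alpha>"
    using carrier_vecD[OF chainsD[OF assms a]]
    by (intro eq_vecI) (auto simp: chain_add_def chain_smult_def chain_zero_def)
qed

lemma chain_sub_add:
  assumes "a \<in> chains X n" "b \<in> chains X n" "p \<in> chains X n" "q \<in> chains X n"
  shows "chain_add (chain_add a b) (chain_smult (-1) (chain_add p q)) =
         chain_add (chain_add a (chain_smult (-1) p)) (chain_add b (chain_smult (-1) q))"
  using assms
  by (intro chain_eq_entryI[of _ X n])
     (auto simp: chain_entry_simps(2-7) chain_entry_simps(1)[OF assms(1)] chain_entry_simps(1)[OF assms(2)]
       chain_entry_simps(1)[OF assms(3)] chain_entry_simps(1)[OF assms(4)])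

lemma chain_sub_smult:
  assumes "a \<in> chains X n" "p \<in> chains X n"
  shows "chain_add (chain_smult c a) (chain_smult (-1) (chain_smult c p)) =
         chain_smult c (chain_add a (chain_smult (-1) p))"
  using assms
  by (intro chain_eq_entryI[of _ X n])
     (auto simp: chain_entry_simps(2-7) chain_entry_simps(1)[OF assms(1)] chain_entry_simps(1)[OF assms(2)]
       algebra_simps)

definition chain_single :: "'c bcx \<Rightarrow> nat \<Rightarrow> 'c \<Rightarrow> real vec \<Rightarrow> 'c \<Rightarrow> real vec" where
  "chain_single X n a v = (\<lambda>\<beta>. if \<beta> = a then v else chain_zero X n \<beta>)"

lemma chain_single_chains:
  "a \<in> ncells X n \<Longrightarrow> v \<in> carrier_vec (cdim X a) \<Longrightarrow> chain_single X n a v \<in> chains X n"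
  unfolding chain_single_def by (rule chainsI) (auto simp: chain_zero_def)

lemma finite_ncells: "finite (cells X) \<Longrightarrow> finite (ncells X n)"
  unfolding ncells_def by simp

lemma cip_add_left:
  "x \<in> chains X n \<Longrightarrow> y \<in> chains X n \<Longrightarrow> z \<in> chains X n \<Longrightarrow>
   cip X n (chain_add x y) z = cip X n x z + cip X n y z"
  unfolding cip_def chain_add_def sum.distrib[symmetric]
  by (intro sum.cong refl add_scalar_prod_distrib) (auto dest: chainsD)

lemma cip_smult_left: "x \<in> chains X n \<Longrightarrow> y \<in> chains X n \<Longrightarrow> cip X n (chain_smult c x) y = c * cip X n x y"
  unfolding cip_def chain_smult_def sum_distrib_left
  by (intro sum.cong refl smult_scalar_prod_distrib) (auto dest: chainsD)

lemma cip_commute: "x \<in> chains X n \<Longrightarrow> y \<in> chains X n \<Longrightarrow> cip X n x y = cip X n y x"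
  unfolding cip_def by (intro sum.cong refl comm_scalar_prod) (auto dest: chainsD)

lemma cip_add_right:
  "x \<in> chains X n \<Longrightarrow> y \<in> chains X n \<Longrightarrow> z \<in> chains X n \<Longrightarrow>
   cip X n z (chain_add x y) = cip X n z x + cip X n z y"
  using cip_commute cip_add_left by (metis chain_add_chains)

lemma cip_smult_right: "x \<in> chains X n \<Longrightarrow> y \<in> chains X n \<Longrightarrow> cip X n y (chain_smult c x) = c * cip X n y x"
  using cip_commute cip_smult_left by (metis chain_smult_chains)

lemma cip_zero_left [simp]: "y \<in> chains X n \<Longrightarrow> cip X n (chain_zero X n) y = 0"
  unfolding cip_def chain_zero_def by (intro sum.neutral) (auto dest: chainsD)

lemma cip_zero_right [simp]: "y \<in> chains X n \<Longrightarrow> cip X n y (chain_zero X n) = 0"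
  using cip_commute cip_zero_left chain_zero_chains by metis

lemma self_scalar_prod_eq_zero:
  assumes "(v :: real vec) \<in> carrier_vec d" "v \<bullet> v = 0"
  shows "v = 0\<^sub>v d"
proof -
  have "\<forall>i\<in>{0..<dim_vec v}. v $ i * v $ i = 0"
    using assms(2) unfolding scalar_prod_def by (subst sum_nonneg_eq_0_iff[symmetric]) auto
  thus ?thesis using assms(1) by (intro eq_vecI) auto
qed

lemma cip_self_eq_zero_iff:
  assumes "finite (cells X)" "x \<in> chains X n"
  shows "cip X n x x = 0 \<longleftrightarrow> x = chain_zero X n"
proof
  assume "cip X n x x = 0"
  hence "\<forall>\<alpha>\<in>ncells X n. x \<alpha> \<bullet> x \<alpha> = 0"
    using assms finite_ncells unfolding cip_def
    by (subst sum_nonneg_eq_0_iff[symmetric]) (auto simp: scalar_prod_def intro: sum_nonneg)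
  thus "x = chain_zero X n"
    using chainsD[OF assms(2)] self_scalar_prod_eq_zero
    by (intro chain_eqI[OF assms(2) chain_zero_chains]) (auto simp: chain_zero_def)
qed (use assms in simp)

lemma psi_chains [simp]: "psi X M n x \<in> chains (morse_cx X M) n"
  unfolding psi_def by (rule chainsI) (auto simp: ncells_def)

lemma bdry_chains [simp]: "bdry X n x \<in> chains X (n - 1)"
  unfolding bdry_def by (rule chainsI) auto

lemma psi_add:
  "x \<in> chains X n \<Longrightarrow> y \<in> chains X n \<Longrightarrow> psi X M n (chain_add x y) = chain_add (psi X M n x) (psi X M n y)"
  unfolding psi_def chain_add_def
  by (rule ext) (auto intro!: vsum_mult_vec_add dest: chainsD)

lemma psi_smult: "x \<in> chains X n \<Longrightarrow> psi X M n (chain_smult c x) = chain_smult c (psi X M n x)"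
  unfolding psi_def chain_smult_def
  by (rule ext) (auto intro!: vsum_mult_vec_smult dest: chainsD)

lemma psi_zero: "psi X M n (chain_zero X n) = chain_zero (morse_cx X M) n"
  unfolding psi_def chain_zero_def by (rule ext) (auto simp: ncells_def intro!: vsum_zero)

context based_complex
begin

lemma bdry_add:
  "x \<in> chains X n \<Longrightarrow> y \<in> chains X n \<Longrightarrow> bdry X n (chain_add x y) = chain_add (bdry X n x) (bdry X n y)"
  unfolding bdry_def chain_add_def
  by (rule ext) (auto intro!: vsum_mult_vec_add bd_carrier dest: chainsD simp: ncells_def)

lemma bdry_smult: "x \<in> chains X n \<Longrightarrow> bdry X n (chain_smult c x) = chain_smult c (bdry X n x)"
  unfolding bdry_def chain_smult_def
  by (rule ext) (auto intro!: vsum_mult_vec_smult bd_carrier dest: chainsD simp: ncells_def)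

lemma bdry_zero: "bdry X n (chain_zero X n) = chain_zero X (n - 1)"
  unfolding bdry_def chain_zero_def by (rule ext) (auto simp: ncells_def bd_carrier intro!: vsum_zero)

lemma bdry_deg_0: "x \<in> chains X 0 \<Longrightarrow> bdry X 0 x = chain_zero X 0"
  unfolding bdry_def chain_zero_def
  by (rule ext) (auto simp: ncells_def bd_zero_deg intro!: vsum_zero dest: chainsD)

lemma bdry_bdry:
  assumes z: "z \<in> chains X n"
  shows "bdry X (n - 1) (bdry X n z) = chain_zero X (n - 1 - 1)"
proof (cases "n - 1")
  case 0
  thus ?thesis using bdry_deg_0[of "bdry X n z"] bdry_chains[of X n z] by simp
next
  case (Suc k)
  hence n: "n = Suc (Suc k)" by simp
  have "bdry X (Suc k) (bdry X n z) = chain_zero X k"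
  proof (rule chain_eqI[OF _ chain_zero_chains])
    show "bdry X (Suc k) (bdry X n z) \<in> chains X k" using bdry_chains[of X "Suc k"] by simp
    fix \<gamma> assume \<gamma>: "\<gamma> \<in> ncells X k"
    have "bdry X (Suc k) (bdry X n z) \<gamma> = vsum (cdim X \<gamma>)
        (\<lambda>\<delta>. bd X \<gamma> \<delta> *\<^sub>v vsum (cdim X \<delta>) (\<lambda>\<alpha>. bd X \<delta> \<alpha> *\<^sub>v z \<alpha>) (ncells X n)) (ncells X (Suc k))"
      using \<gamma> unfolding n by (simp add: bdry_def cong: vsum_cong)
    also have "\<dots> = vsum (cdim X \<gamma>) (\<lambda>\<alpha>. msum (cdim X \<gamma>) (cdim X \<alpha>)
        (\<lambda>\<delta>. bd X \<gamma> \<delta> * bd X \<delta> \<alpha>) (ncells X (Suc k)) *\<^sub>v z \<alpha>) (ncells X n)"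
      using \<gamma> chainsD[OF z] by (intro vsum_mult_vsum) (auto intro!: bd_carrier simp: ncells_def)
    also have "\<dots> = vsum (cdim X \<gamma>) (\<lambda>\<alpha>. 0\<^sub>v (cdim X \<gamma>)) (ncells X n)"
    proof (intro vsum_cong)
      fix \<alpha> assume \<alpha>: "\<alpha> \<in> ncells X n"
      have "msum (cdim X \<gamma>) (cdim X \<alpha>) (\<lambda>\<delta>. bd X \<gamma> \<delta> * bd X \<delta> \<alpha>) (ncells X (Suc k)) =
          msum (cdim X \<gamma>) (cdim X \<alpha>) (\<lambda>\<delta>. bd X \<gamma> \<delta> * bd X \<delta> \<alpha>) (cells X)"
        using \<alpha> \<gamma> n bd_carrier bd_zero_deg finite_cells
        by (intro msum_mono_neutral[symmetric]) (auto simp: ncells_def right_mult_zero_mat)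
      also have "\<dots> = 0\<^sub>m (cdim X \<gamma>) (cdim X \<alpha>)"
        using bd_bd_zero \<alpha> \<gamma> by (simp add: ncells_def)
      finally show "msum (cdim X \<gamma>) (cdim X \<alpha>) (\<lambda>\<delta>. bd X \<gamma> \<delta> * bd X \<delta> \<alpha>) (ncells X (Suc k)) *\<^sub>v z \<alpha>
          = 0\<^sub>v (cdim X \<gamma>)"
        using chainsD[OF z \<alpha>] by simp
    qed
    also have "\<dots> = chain_zero X k \<gamma>"
      using \<gamma> by (simp add: vsum_zero chain_zero_def)
    finally show "bdry X (Suc k) (bdry X n z) \<gamma> = chain_zero X k \<gamma>" .
  qed
  thus ?thesis using n by simp
qed

end

context matched_complex
begin

lemma Gamma_bd_ncells:
  assumes \<beta>: "\<beta> \<in> crit X M" "deg X \<beta> = n - 1" and \<alpha>: "\<alpha> \<in> ncells X n"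
  shows "msum (cdim X \<beta>) (cdim X \<alpha>) (\<lambda>\<delta>. Gamma X M \<beta> \<delta> * bd X \<delta> \<alpha>) (ncells X (n - 1)) =
         msum (cdim X \<beta>) (cdim X \<alpha>) (\<lambda>\<beta>'. bd (morse_cx X M) \<beta> \<beta>' * Gamma X M \<beta>' \<alpha>)
           {\<beta>' \<in> crit X M. deg X \<beta>' = n}"
proof (cases n)
  case 0
  have "msum (cdim X \<beta>) (cdim X \<alpha>) (\<lambda>\<delta>. Gamma X M \<beta> \<delta> * bd X \<delta> \<alpha>) (ncells X (n - 1)) =
        0\<^sub>m (cdim X \<beta>) (cdim X \<alpha>)"
    using 0 \<alpha> bd_zero_deg by (intro msum_zero) (auto simp: ncells_def)
  moreover have "msum (cdim X \<beta>) (cdim X \<alpha>) (\<lambda>\<beta>'. bd (morse_cx X M) \<beta> \<beta>' * Gamma X M \<beta>' \<alpha>)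
      {\<beta>' \<in> crit X M. deg X \<beta>' = n} = 0\<^sub>m (cdim X \<beta>) (cdim X \<alpha>)"
    using 0 by (intro msum_zero) auto
  ultimately show ?thesis by simp
next
  case (Suc m)
  have \<alpha>c: "\<alpha> \<in> cells X" "deg X \<alpha> = n" using \<alpha> by (auto simp: ncells_def)
  have "msum (cdim X \<beta>) (cdim X \<alpha>) (\<lambda>\<delta>. Gamma X M \<beta> \<delta> * bd X \<delta> \<alpha>) (ncells X (n - 1)) = Gamma_bd X M \<beta> \<alpha>"
    unfolding Gamma_bd_def using \<alpha>c Suc bd_zero_deg finite_cells
    by (intro msum_mono_neutral[symmetric]) (auto simp: ncells_def)
  also have "\<dots> = Gamma_crit_Gamma X M \<beta> \<alpha>"
    using Gamma_bd_eq_Gamma_crit_Gamma[OF \<beta>(1) \<alpha>c(1)] \<alpha>c \<beta> Suc by simp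
  also have "\<dots> = msum (cdim X \<beta>) (cdim X \<alpha>) (\<lambda>\<beta>'. bd (morse_cx X M) \<beta> \<beta>' * Gamma X M \<beta>' \<alpha>)
      {\<beta>' \<in> crit X M. deg X \<beta>' = n}"
    unfolding Gamma_crit_Gamma_def \<alpha>c(2) using \<beta> Suc by (intro msum_cong) auto
  finally show ?thesis .
qed

lemma psi_bdry:
  assumes z: "z \<in> chains X n"
  shows "psi X M (n - 1) (bdry X n z) = bdry (morse_cx X M) n (psi X M n z)"
proof
  fix \<beta>
  show "psi X M (n - 1) (bdry X n z) \<beta> = bdry (morse_cx X M) n (psi X M n z) \<beta>"
  proof (cases "\<beta> \<in> crit X M \<and> deg X \<beta> = n - 1")
    case True
    have "psi X M (n - 1) (bdry X n z) \<beta> =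
        vsum (cdim X \<beta>) (\<lambda>\<delta>. Gamma X M \<beta> \<delta> *\<^sub>v bdry X n z \<delta>) (ncells X (n - 1))"
      using True by (simp add: psi_def)
    also have "\<dots> = vsum (cdim X \<beta>) (\<lambda>\<delta>. Gamma X M \<beta> \<delta> *\<^sub>v
        vsum (cdim X \<delta>) (\<lambda>\<alpha>. bd X \<delta> \<alpha> *\<^sub>v z \<alpha>) (ncells X n)) (ncells X (n - 1))"
      by (intro vsum_cong) (simp add: bdry_def)
    also have "\<dots> = vsum (cdim X \<beta>) (\<lambda>\<alpha>. msum (cdim X \<beta>) (cdim X \<alpha>)
        (\<lambda>\<delta>. Gamma X M \<beta> \<delta> * bd X \<delta> \<alpha>) (ncells X (n - 1)) *\<^sub>v z \<alpha>) (ncells X n)"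
      using chainsD[OF z] by (intro vsum_mult_vsum) (auto intro!: bd_carrier simp: ncells_def)
    also have "\<dots> = vsum (cdim X \<beta>) (\<lambda>\<alpha>. msum (cdim X \<beta>) (cdim X \<alpha>)
        (\<lambda>\<beta>'. bd (morse_cx X M) \<beta> \<beta>' * Gamma X M \<beta>' \<alpha>) {\<beta>' \<in> crit X M. deg X \<beta>' = n} *\<^sub>v z \<alpha>) (ncells X n)"
      using Gamma_bd_ncells True by (intro vsum_cong) simp
    also have "\<dots> = vsum (cdim X \<beta>) (\<lambda>\<beta>'. bd (morse_cx X M) \<beta> \<beta>' *\<^sub>v
        vsum (cdim X \<beta>') (\<lambda>\<alpha>. Gamma X M \<beta>' \<alpha> *\<^sub>v z \<alpha>) (ncells X n)) {\<beta>' \<in> crit X M. deg X \<beta>' = n}"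
      using chainsD[OF z] by (intro vsum_mult_vsum[symmetric]) auto
    also have "\<dots> = vsum (cdim X \<beta>) (\<lambda>\<beta>'. bd (morse_cx X M) \<beta> \<beta>' *\<^sub>v psi X M n z \<beta>')
        {\<beta>' \<in> crit X M. deg X \<beta>' = n}"
      by (intro vsum_cong) (simp add: psi_def)
    also have "\<dots> = bdry (morse_cx X M) n (psi X M n z) \<beta>"
      using True by (simp add: bdry_def ncells_def)
    finally show ?thesis .
  qed (auto simp: psi_def bdry_def ncells_def)
qed

end

definition iota :: "'c bcx \<Rightarrow> ('c \<times> 'c) set \<Rightarrow> nat \<Rightarrow> ('c \<Rightarrow> real vec) \<Rightarrow> 'c \<Rightarrow> real vec" where
  "iota X M n w = (\<lambda>\<alpha>. if \<alpha> \<in> ncells X n \<and> \<alpha> \<notin> crit X M then 0\<^sub>v (cdim X \<alpha>) else w \<alpha>)"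

fun iota_seq :: "'c bcx \<Rightarrow> ('c \<times> 'c) set list \<Rightarrow> nat \<Rightarrow> ('c \<Rightarrow> real vec) \<Rightarrow> 'c \<Rightarrow> real vec" where
  "iota_seq X [] n w = w"
| "iota_seq X (M # Ms) n w = iota X M n (iota_seq (morse_cx X M) Ms n w)"

lemma iota_chains [simp]: "w \<in> chains (morse_cx X M) n \<Longrightarrow> iota X M n w \<in> chains X n"
  unfolding iota_def
  by (rule chainsI) (auto simp: ncells_def crit_def dest: chainsD chainsD_outside)

lemma iota_add: "iota X M n (chain_add x y) = chain_add (iota X M n x) (iota X M n y)"
  unfolding iota_def chain_add_def by auto

lemma iota_smult: "iota X M n (chain_smult c x) = chain_smult c (iota X M n x)"
  unfolding iota_def chain_smult_def by auto

lemma iota_zero: "iota X M n (chain_zero (morse_cx X M) n) = chain_zero X n"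
  unfolding iota_def chain_zero_def by (rule ext) (auto simp: ncells_def crit_def)

lemma iota_seq_chains [simp]: "w \<in> chains (morse_seq X Ms) n \<Longrightarrow> iota_seq X Ms n w \<in> chains X n"
  by (induction Ms arbitrary: X) auto

lemma iota_seq_add: "iota_seq X Ms n (chain_add x y) = chain_add (iota_seq X Ms n x) (iota_seq X Ms n y)"
  by (induction Ms arbitrary: X) (auto simp: iota_add)

lemma iota_seq_smult: "iota_seq X Ms n (chain_smult c x) = chain_smult c (iota_seq X Ms n x)"
  by (induction Ms arbitrary: X) (auto simp: iota_smult)

lemma iota_seq_zero: "iota_seq X Ms n (chain_zero (morse_seq X Ms) n) = chain_zero X n"
  by (induction Ms arbitrary: X) (auto simp: iota_zero)

lemma psi_seq_chains [simp]: "x \<in> chains X n \<Longrightarrow> psi_seq X Ms n x \<in> chains (morse_seq X Ms) n"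
  by (induction Ms arbitrary: X x) auto

lemma psi_seq_add:
  "x \<in> chains X n \<Longrightarrow> y \<in> chains X n \<Longrightarrow>
   psi_seq X Ms n (chain_add x y) = chain_add (psi_seq X Ms n x) (psi_seq X Ms n y)"
  by (induction Ms arbitrary: X x y) (auto simp: psi_add)

lemma psi_seq_smult: "x \<in> chains X n \<Longrightarrow> psi_seq X Ms n (chain_smult c x) = chain_smult c (psi_seq X Ms n x)"
  by (induction Ms arbitrary: X x) (auto simp: psi_smult)

lemma psi_seq_zero: "psi_seq X Ms n (chain_zero X n) = chain_zero (morse_seq X Ms) n"
  by (induction Ms arbitrary: X) (auto simp: psi_zero)

context matched_complex
begin

lemma psi_iota:
  assumes w: "w \<in> chains (morse_cx X M) n"
  shows "psi X M n (iota X M n w) = w"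
proof (rule chain_eqI[OF psi_chains w])
  fix \<beta> assume "\<beta> \<in> ncells (morse_cx X M) n"
  hence \<beta>: "\<beta> \<in> crit X M" "deg X \<beta> = n" "\<beta> \<in> ncells X n" by (auto simp: ncells_def crit_def)
  have "psi X M n (iota X M n w) \<beta> = vsum (cdim X \<beta>) (\<lambda>\<alpha>. Gamma X M \<beta> \<alpha> *\<^sub>v iota X M n w \<alpha>) (ncells X n)"
    using \<beta> by (simp add: psi_def)
  also have "\<dots> = Gamma X M \<beta> \<beta> *\<^sub>v iota X M n w \<beta>"
  proof (rule vsum_single_nonzero)
    fix \<alpha> assume \<alpha>: "\<alpha> \<in> ncells X n - {\<beta>}"
    show "Gamma X M \<beta> \<alpha> *\<^sub>v iota X M n w \<alpha> = 0\<^sub>v (cdim X \<beta>)"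
    proof (cases "\<alpha> \<in> crit X M")
      case True
      hence "Gamma X M \<beta> \<alpha> = 0\<^sub>m (cdim X \<beta>) (cdim X \<alpha>)" using Gamma_crit_crit \<alpha> \<beta> by (auto simp: ncells_def)
      thus ?thesis using chainsD[OF iota_chains[OF w]] \<alpha> by simp
    qed (use \<alpha> in \<open>simp add: iota_def\<close>)
  qed (use finite_ncells[OF finite_cells] \<beta> chainsD[OF iota_chains[OF w]]
       in \<open>auto intro!: mult_mat_vec_carrier[OF Gamma_carrier]\<close>)
  also have "\<dots> = w \<beta>" using \<beta> chainsD[OF w] by (simp add: Gamma_refl iota_def ncells_def)
  finally show "psi X M n (iota X M n w) \<beta> = w \<beta>" .
qed

end

lemma matched_complexI: "based_complex X \<Longrightarrow> morse_matching X M \<Longrightarrow> matched_complex X M"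
  by (simp add: matched_complex_def matched_complex_axioms_def)

lemma based_morse_seq: "based_complex X \<Longrightarrow> seq_morse X Ms \<Longrightarrow> based_complex (morse_seq X Ms)"
  by (induction Ms arbitrary: X) (auto intro: based_complex_morse_cx matched_complexI)

lemma psi_seq_iota_seq:
  "based_complex X \<Longrightarrow> seq_morse X Ms \<Longrightarrow> w \<in> chains (morse_seq X Ms) n \<Longrightarrow>
   psi_seq X Ms n (iota_seq X Ms n w) = w"
proof (induction Ms arbitrary: X)
  case (Cons M Ms)
  have m: "matched_complex X M" using Cons.prems by (auto intro: matched_complexI)
  show ?case
    using Cons.IH[OF based_complex_morse_cx[OF m]] Cons.prems matched_complex.psi_iota[OF m] by simp
qed simp

lemma psi_seq_bdry:
  "based_complex X \<Longrightarrow> seq_morse X Ms \<Longrightarrow> z \<in> chains X n \<Longrightarrow>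
   psi_seq X Ms (n - 1) (bdry X n z) = bdry (morse_seq X Ms) n (psi_seq X Ms n z)"
proof (induction Ms arbitrary: X z)
  case (Cons M Ms)
  have m: "matched_complex X M" using Cons.prems by (auto intro: matched_complexI)
  show ?case
    using Cons.IH[OF based_complex_morse_cx[OF m]] Cons.prems matched_complex.psi_bdry[OF m] by simp
qed simp

section \<open>Freeness and the boundary on the kernel of \<open>\<Psi>\<close>\<close>

definition free_in_deg :: "'c bcx \<Rightarrow> ('c \<times> 'c) set \<Rightarrow> nat \<Rightarrow> bool" where
  "free_in_deg X M n \<longleftrightarrow> (\<forall>(\<alpha>, \<beta>)\<in>M. \<not> (deg X \<alpha> = n \<and> deg X \<beta> + 1 = n))"

lemma seq_free_Cons_iff:
  "seq_free X (M # Ms) n \<longleftrightarrow> free_in_deg X M n \<and> seq_free (morse_cx X M) Ms n"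
  by (simp add: free_in_deg_def)

context matched_complex
begin

lemma free_in_deg_iff: "free_in_deg X M n \<longleftrightarrow> (\<forall>(\<alpha>, \<beta>)\<in>M. deg X \<alpha> \<noteq> n)"
  unfolding free_in_deg_def using matched_deg by fastforce

lemma psi_eq_on_crit_if_no_lower:
  assumes u: "u \<in> chains X m" and no_lower: "\<And>\<delta> y. \<delta> \<in> ncells X m \<Longrightarrow> (y, \<delta>) \<notin> M"
    and \<tau>: "\<tau> \<in> crit X M" "deg X \<tau> = m"
  shows "psi X M m u \<tau> = u \<tau>"
proof -
  have \<tau>n: "\<tau> \<in> ncells X m" using \<tau> crit_cells by (auto simp: ncells_def)
  have "psi X M m u \<tau> = vsum (cdim X \<tau>) (\<lambda>\<delta>. Gamma X M \<tau> \<delta> *\<^sub>v u \<delta>) (ncells X m)"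
    using \<tau> by (simp add: psi_def)
  also have "\<dots> = Gamma X M \<tau> \<tau> *\<^sub>v u \<tau>"
  proof (rule vsum_single_nonzero)
    fix \<delta> assume \<delta>: "\<delta> \<in> ncells X m - {\<tau>}"
    hence "Gamma X M \<tau> \<delta> = 0\<^sub>m (cdim X \<tau>) (cdim X \<delta>)"
      using Gamma_same_deg_zero[OF \<tau>(1)] no_lower \<tau> by (auto simp: ncells_def)
    thus "Gamma X M \<tau> \<delta> *\<^sub>v u \<delta> = 0\<^sub>v (cdim X \<tau>)" using chainsD[OF u] \<delta> by simp
  qed (use finite_ncells[OF finite_cells] \<tau>n chainsD[OF u \<tau>n] in \<open>auto simp: Gamma_refl\<close>)
  also have "\<dots> = u \<tau>" using chainsD[OF u \<tau>n] by (simp add: Gamma_refl)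
  finally show ?thesis .
qed

text \<open>Any other cell \<open>\<delta>'\<close> contributing to the boundary at \<open>\<rho>\<close> gives the path
  \<open>\<delta>' \<rightarrow> \<rho> \<rightarrow> \<delta>\<close> in the reversed graph.\<close>

lemma bdry_at_matched_partner:
  assumes u: "u \<in> chains X m" and \<delta>\<rho>: "(\<delta>, \<rho>) \<in> M" and \<delta>: "deg X \<delta> = m"
    and vanish: "\<And>\<delta>'. \<delta>' \<in> ncells X m \<Longrightarrow> (\<delta>', \<delta>) \<in> r\<^sup>+ \<Longrightarrow> u \<delta>' = 0\<^sub>v (cdim X \<delta>')"
  shows "bdry X m u \<rho> = bd X \<rho> \<delta> *\<^sub>v u \<delta>"
proof -
  have c: "\<delta> \<in> cells X" "\<rho> \<in> cells X" "deg X \<delta> = deg X \<rho> + 1" using matched_deg[OF \<delta>\<rho>] by auto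
  have \<delta>n: "\<delta> \<in> ncells X m" and \<rho>n: "\<rho> \<in> ncells X (m - 1)" using c \<delta> by (auto simp: ncells_def)
  have "bdry X m u \<rho> = vsum (cdim X \<rho>) (\<lambda>\<delta>'. bd X \<rho> \<delta>' *\<^sub>v u \<delta>') (ncells X m)"
    using \<rho>n by (simp add: bdry_def)
  also have "\<dots> = bd X \<rho> \<delta> *\<^sub>v u \<delta>"
  proof (rule vsum_single_nonzero)
    fix \<delta>' assume \<delta>': "\<delta>' \<in> ncells X m - {\<delta>}"
    hence \<delta>'c: "\<delta>' \<in> cells X" by (simp add: ncells_def)
    show "bd X \<rho> \<delta>' *\<^sub>v u \<delta>' = 0\<^sub>v (cdim X \<rho>)"
    proof (cases "bd X \<rho> \<delta>' = 0\<^sub>m (cdim X \<rho>) (cdim X \<delta>')")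
      case False
      hence "(\<delta>', \<rho>) \<in> edges X" using \<delta>'c c unfolding edges_def by auto
      moreover have "(\<delta>', \<rho>) \<notin> M" using matched_unique_snd[OF \<delta>\<rho>] \<delta>' by blast
      ultimately have "(\<delta>', \<rho>) \<in> r" unfolding redges_def by blast
      moreover have "(\<rho>, \<delta>) \<in> r" using \<delta>\<rho> unfolding redges_def by blast
      ultimately have "(\<delta>', \<delta>) \<in> r\<^sup>+" by (rule trancl_into_trancl[OF r_into_trancl])
      hence "u \<delta>' = 0\<^sub>v (cdim X \<delta>')" using vanish \<delta>' by blast
      thus ?thesis using bd_carrier[OF \<delta>'c c(2)] by simp
    qed (use chainsD[OF u] \<delta>' in simp)
  qed (use finite_ncells[OF finite_cells] \<delta>n chainsD[OF u \<delta>n] bd_carrier[OF c(1,2)] in auto)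
  finally show ?thesis .
qed

text \<open>Take a nonzero entry \<open>u \<delta>\<close> with \<open>\<delta>\<close> minimal for the reversed graph. The cell \<open>\<delta>\<close> is not
  critical since \<open>\<Psi> u = 0\<close>, and freeness rules out a partner above it, so its partner \<open>\<rho>\<close> lies
  below; there \<open>\<partial> u\<close> is the invertible block \<open>\<partial>\<^sub>\<rho>\<^sub>\<delta>\<close> applied to \<open>u \<delta>\<close>.\<close>

lemma cycle_zero_if_psi_zero:
  assumes free: "free_in_deg X M (Suc m)" and u: "u \<in> chains X m"
    and psi_u: "psi X M m u = chain_zero (morse_cx X M) m"
    and bdry_u: "bdry X m u = chain_zero X (m - 1)"
  shows "u = chain_zero X m"
proof (rule ccontr)
  assume ne: "u \<noteq> chain_zero X m"
  let ?S = "{\<delta> \<in> ncells X m. u \<delta> \<noteq> 0\<^sub>v (cdim X \<delta>)}"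
  have "?S \<noteq> {}"
  proof
    assume "?S = {}"
    hence "u = chain_zero X m" by (intro chain_eqI[OF u chain_zero_chains]) (auto simp: chain_zero_def)
    with ne show False ..
  qed
  then obtain \<delta>0 where "\<delta>0 \<in> ?S" by blast
  from wfE_min[OF wf_redges_trancl this] obtain \<delta>
    where \<delta>: "\<delta> \<in> ncells X m" "u \<delta> \<noteq> 0\<^sub>v (cdim X \<delta>)" and min: "\<And>y. (y, \<delta>) \<in> r\<^sup>+ \<Longrightarrow> y \<notin> ?S"
    by blast
  have no_lower: "(y, \<delta>') \<notin> M" if "\<delta>' \<in> ncells X m" for \<delta>' y
  proof
    assume y: "(y, \<delta>') \<in> M"
    hence "deg X y = Suc m" using matched_deg that by (auto simp: ncells_def)
    with y free show False unfolding free_in_deg_iff by blast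
  qed
  have "\<delta> \<notin> crit X M"
  proof
    assume "\<delta> \<in> crit X M"
    hence "psi X M m u \<delta> = u \<delta>" using psi_eq_on_crit_if_no_lower[OF u no_lower] \<delta> by (auto simp: ncells_def)
    with psi_u \<delta> \<open>\<delta> \<in> crit X M\<close> show False by (simp add: chain_zero_def ncells_def)
  qed
  then obtain \<rho> where \<delta>\<rho>: "(\<delta>, \<rho>) \<in> M" using \<delta> no_lower crit_iff by (auto simp: ncells_def)
  have c: "\<delta> \<in> cells X" "\<rho> \<in> cells X" "deg X \<delta> = deg X \<rho> + 1" using matched_deg[OF \<delta>\<rho>] by auto
  have iso: "cdim X \<delta> = cdim X \<rho>" "invertible_mat (bd X \<rho> \<delta>)" using matched_iso[OF \<delta>\<rho>] by auto
  have \<rho>n: "\<rho> \<in> ncells X (m - 1)" using c \<delta> by (auto simp: ncells_def)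
  have "bd X \<rho> \<delta> *\<^sub>v u \<delta> = bdry X m u \<rho>"
    using bdry_at_matched_partner[OF u \<delta>\<rho>] min \<delta> by (auto simp: ncells_def)
  also have "\<dots> = 0\<^sub>v (cdim X \<rho>)" using bdry_u \<rho>n by (simp add: chain_zero_def)
  finally have "u \<delta> = 0\<^sub>v (cdim X \<delta>)"
    using invertible_mult_vec_zero[OF iso(2)] bd_carrier[OF c(1,2)] chainsD[OF u \<delta>(1)] iso by simp
  with \<delta> show False by simp
qed

lemma single_matched_in_ker_psi:
  assumes \<alpha>\<beta>: "(\<alpha>, \<beta>) \<in> M" and v: "v \<in> carrier_vec (cdim X \<alpha>)"
  shows "psi X M (deg X \<alpha>) (chain_single X (deg X \<alpha>) \<alpha> v) = chain_zero (morse_cx X M) (deg X \<alpha>)"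
proof
  fix b show "psi X M (deg X \<alpha>) (chain_single X (deg X \<alpha>) \<alpha> v) b = chain_zero (morse_cx X M) (deg X \<alpha>) b"
  proof (cases "b \<in> crit X M \<and> deg X b = deg X \<alpha>")
    case True
    have "Gamma X M b \<alpha> = 0\<^sub>m (cdim X b) (cdim X \<alpha>)"
      using Gamma_same_deg_zero[of b \<alpha>] True crit_not_matched[OF _ \<alpha>\<beta>] matched_upper_not_lower[OF \<alpha>\<beta>]
      by auto
    hence "vsum (cdim X b) (\<lambda>a. Gamma X M b a *\<^sub>v chain_single X (deg X \<alpha>) \<alpha> v a) (ncells X (deg X \<alpha>))
        = 0\<^sub>v (cdim X b)"
      using v by (intro vsum_zero) (auto simp: chain_single_def chain_zero_def)
    thus ?thesis using True by (simp add: psi_def chain_zero_def ncells_def)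
  qed (auto simp: psi_def chain_zero_def ncells_def)
qed

lemma bdry_single_matched:
  assumes \<alpha>\<beta>: "(\<alpha>, \<beta>) \<in> M" and v: "v \<in> carrier_vec (cdim X \<alpha>)"
  shows "bdry X (deg X \<alpha>) (chain_single X (deg X \<alpha>) \<alpha> v) \<beta> = bd X \<beta> \<alpha> *\<^sub>v v"
proof -
  have c: "\<alpha> \<in> cells X" "\<beta> \<in> cells X" "deg X \<alpha> = deg X \<beta> + 1" using matched_deg[OF \<alpha>\<beta>] by auto
  have "vsum (cdim X \<beta>) (\<lambda>a. bd X \<beta> a *\<^sub>v chain_single X (deg X \<alpha>) \<alpha> v a) (ncells X (deg X \<alpha>))
      = bd X \<beta> \<alpha> *\<^sub>v v"
    using finite_ncells[OF finite_cells] c v mult_mat_vec_carrier[OF bd_carrier[OF c(1,2)] v] bd_carrier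
    by (subst vsum_single_nonzero[of _ \<alpha>]) (auto simp: chain_single_def chain_zero_def ncells_def)
  thus ?thesis using c by (simp add: bdry_def ncells_def)
qed

lemma matched_pair_ker_witness:
  assumes \<alpha>\<beta>: "(\<alpha>, \<beta>) \<in> M"
  shows "\<exists>z\<in>chains X (deg X \<alpha>). psi X M (deg X \<alpha>) z = chain_zero (morse_cx X M) (deg X \<alpha>) \<and>
           bdry X (deg X \<alpha>) z \<noteq> chain_zero X (deg X \<alpha> - 1)"
proof -
  have c: "\<alpha> \<in> cells X" "\<beta> \<in> cells X" "deg X \<alpha> = deg X \<beta> + 1" using matched_deg[OF \<alpha>\<beta>] by auto
  have iso: "cdim X \<alpha> = cdim X \<beta>" "invertible_mat (bd X \<beta> \<alpha>)" using matched_iso[OF \<alpha>\<beta>] by auto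
  have B: "bd X \<beta> \<alpha> \<in> carrier_mat (cdim X \<alpha>) (cdim X \<alpha>)" using bd_carrier[OF c(1,2)] iso by simp
  have "cdim X \<alpha> \<noteq> 0"
    using edgesD[OF matched_edge[OF \<alpha>\<beta>]] B iso by (auto intro!: eq_matI)
  define e where "e = (unit_vec (cdim X \<alpha>) 0 :: real vec)"
  have e: "e \<in> carrier_vec (cdim X \<alpha>)" "e \<noteq> 0\<^sub>v (cdim X \<alpha>)"
    using \<open>cdim X \<alpha> \<noteq> 0\<close> by (auto simp: e_def)
  have "bdry X (deg X \<alpha>) (chain_single X (deg X \<alpha>) \<alpha> e) \<beta> \<noteq> chain_zero X (deg X \<alpha> - 1) \<beta>"
    using bdry_single_matched[OF \<alpha>\<beta> e(1)] invertible_mult_vec_zero[OF iso(2)] B e c iso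
    by (auto simp: chain_zero_def ncells_def)
  thus ?thesis
    using single_matched_in_ker_psi[OF \<alpha>\<beta> e(1)] chain_single_chains[of \<alpha> X "deg X \<alpha>" e] c e
    by (auto simp: ncells_def)
qed

end

lemma bdry_zero_on_ker_psi_seq:
  "based_complex X \<Longrightarrow> seq_morse X Ms \<Longrightarrow> seq_free X Ms n \<Longrightarrow> z \<in> kerPsi X Ms n \<Longrightarrow>
   bdry X n z = chain_zero X (n - 1)"
proof (induction Ms arbitrary: X z)
  case Nil
  then show ?case using based_complex.bdry_zero by (fastforce simp: kerPsi_def)
next
  case (Cons M Ms)
  have m: "matched_complex X M" using Cons.prems by (auto intro: matched_complexI)
  interpret matched_complex X M by (rule m)
  have z: "z \<in> chains X n" using Cons.prems by (simp add: kerPsi_def)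
  have "bdry (morse_cx X M) n (psi X M n z) = chain_zero (morse_cx X M) (n - 1)"
    using Cons.IH[OF based_complex_morse_cx[OF m], of "psi X M n z"] Cons.prems
    by (simp add: kerPsi_def seq_free_Cons_iff)
  show ?case
  proof (cases n)
    case 0
    thus ?thesis using bdry_deg_0 z by simp
  next
    case (Suc k)
    have "psi X M k (bdry X n z) = chain_zero (morse_cx X M) k"
      using psi_bdry[OF z] \<open>bdry (morse_cx X M) n (psi X M n z) = _\<close> Suc by simp
    moreover have "bdry X k (bdry X n z) = chain_zero X (k - 1)"
      using bdry_bdry[OF z] Suc by simp
    moreover have "free_in_deg X M (Suc k)" using Cons.prems(3) Suc seq_free_Cons_iff by blast
    ultimately show ?thesis
      using cycle_zero_if_psi_zero[of k "bdry X n z"] bdry_chains[of X n z] Suc by simp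
  qed
qed

lemma ker_psi_seq_bdry_nonzero:
  "based_complex X \<Longrightarrow> seq_morse X Ms \<Longrightarrow> \<not> seq_free X Ms n \<Longrightarrow>
   \<exists>z\<in>kerPsi X Ms n. bdry X n z \<noteq> chain_zero X (n - 1)"
proof (induction Ms arbitrary: X)
  case Nil
  then show ?case by simp
next
  case (Cons M Ms)
  have m: "matched_complex X M" using Cons.prems by (auto intro: matched_complexI)
  interpret matched_complex X M by (rule m)
  show ?case
  proof (cases "free_in_deg X M n")
    case False
    then obtain \<alpha> \<beta> where \<alpha>\<beta>: "(\<alpha>, \<beta>) \<in> M" and n: "n = deg X \<alpha>"
      unfolding free_in_deg_iff by auto
    then obtain z where "z \<in> chains X n" "psi X M n z = chain_zero (morse_cx X M) n"
      "bdry X n z \<noteq> chain_zero X (n - 1)"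
      using matched_pair_ker_witness by blast
    thus ?thesis by (auto simp: kerPsi_def psi_seq_zero)
  next
    case True
    hence "\<not> seq_free (morse_cx X M) Ms n" using Cons.prems(3) seq_free_Cons_iff by blast
    then obtain w where w: "w \<in> kerPsi (morse_cx X M) Ms n"
      "bdry (morse_cx X M) n w \<noteq> chain_zero (morse_cx X M) (n - 1)"
      using Cons.IH[OF based_complex_morse_cx[OF m]] Cons.prems by auto
    have wc: "w \<in> chains (morse_cx X M) n" using w(1) by (simp add: kerPsi_def)
    have "iota X M n w \<in> kerPsi X (M # Ms) n"
      using w(1) psi_iota[OF wc] iota_chains[OF wc] by (simp add: kerPsi_def)
    moreover have "bdry X n (iota X M n w) \<noteq> chain_zero X (n - 1)"
    proof
      assume "bdry X n (iota X M n w) = chain_zero X (n - 1)"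
      hence "bdry (morse_cx X M) n w = chain_zero (morse_cx X M) (n - 1)"
        using psi_bdry[OF iota_chains[OF wc]] psi_iota[OF wc] by (simp add: psi_zero)
      with w(2) show False ..
    qed
    ultimately show ?thesis by blast
  qed
qed

lemma seq_free_iff_ker_psi_seq_cycles:
  "based_complex X \<Longrightarrow> seq_morse X Ms \<Longrightarrow>
   seq_free X Ms n \<longleftrightarrow> (\<forall>z\<in>kerPsi X Ms n. bdry X n z = chain_zero X (n - 1))"
  using bdry_zero_on_ker_psi_seq ker_psi_seq_bdry_nonzero by blast

section \<open>Spans of chains and representing linear functionals\<close>

inductive_set chain_span :: "'c bcx \<Rightarrow> nat \<Rightarrow> ('c \<Rightarrow> real vec) set \<Rightarrow> ('c \<Rightarrow> real vec) set"
  for X n S where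
  zero: "chain_zero X n \<in> chain_span X n S"
| base: "v \<in> S \<Longrightarrow> v \<in> chain_span X n S"
| add: "x \<in> chain_span X n S \<Longrightarrow> y \<in> chain_span X n S \<Longrightarrow> chain_add x y \<in> chain_span X n S"
| smult: "x \<in> chain_span X n S \<Longrightarrow> chain_smult c x \<in> chain_span X n S"

lemma chain_span_minimal:
  assumes "S \<subseteq> W" "chain_zero X n \<in> W"
    "\<And>x y. x \<in> W \<Longrightarrow> y \<in> W \<Longrightarrow> chain_add x y \<in> W" "\<And>c x. x \<in> W \<Longrightarrow> chain_smult c x \<in> W"
  shows "chain_span X n S \<subseteq> W"
proof
  fix z assume "z \<in> chain_span X n S"
  thus "z \<in> W" by induction (use assms in auto)
qed

lemma chain_span_chains: "S \<subseteq> chains X n \<Longrightarrow> chain_span X n S \<subseteq> chains X n"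
  by (rule chain_span_minimal) auto

lemma chain_span_mono: "S \<subseteq> T \<Longrightarrow> chain_span X n S \<subseteq> chain_span X n T"
  by (rule chain_span_minimal) (auto intro: chain_span.intros)

lemma chain_span_empty: "chain_span X n {} = {chain_zero X n}"
proof -
  have "chain_add (chain_zero X n) (chain_zero X n) = chain_zero X n"
       "chain_smult c (chain_zero X n) = chain_zero X n" for c
    by (auto simp: chain_add_def chain_smult_def chain_zero_def)
  hence "chain_span X n {} \<subseteq> {chain_zero X n}" by (intro chain_span_minimal) auto
  thus ?thesis by (auto intro: chain_span.zero)
qed

lemma chain_span_image:
  assumes U: "U \<subseteq> chains X n" and f0: "f (chain_zero X n) = chain_zero X n"
    and f_add: "\<And>x y. x \<in> chains X n \<Longrightarrow> y \<in> chains X n \<Longrightarrow> f (chain_add x y) = chain_add (f x) (f y)"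
    and f_smult: "\<And>c x. x \<in> chains X n \<Longrightarrow> f (chain_smult c x) = chain_smult c (f x)"
  shows "f ` chain_span X n U \<subseteq> chain_span X n (f ` U)"
proof -
  have "chain_span X n U \<subseteq> {z \<in> chains X n. f z \<in> chain_span X n (f ` U)}"
    using U by (intro chain_span_minimal) (auto simp: f0 f_add f_smult intro: chain_span.intros)
  thus ?thesis by blast
qed

lemma chain_span_insert:
  assumes S: "S \<subseteq> chains X n" and v: "v \<in> chains X n" and z: "z \<in> chain_span X n (insert v S)"
  shows "\<exists>u\<in>chain_span X n S. \<exists>a. z = chain_add u (chain_smult a v)"
proof -
  let ?W = "{z. \<exists>u\<in>chain_span X n S. \<exists>a. z = chain_add u (chain_smult a v)}"
  have spanS: "chain_span X n S \<subseteq> chains X n" using chain_span_chains[OF S] .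
  have "chain_span X n (insert v S) \<subseteq> ?W"
  proof (rule chain_span_minimal)
    show "insert v S \<subseteq> ?W"
    proof
      fix w assume "w \<in> insert v S"
      moreover have "v = chain_add (chain_zero X n) (chain_smult 1 v)"
        using v by (intro chain_eq_entryI[of _ X n]) (auto simp: chain_entry_simps)
      moreover have "w = chain_add w (chain_smult 0 v)" if "w \<in> S"
        using v S that by (intro chain_eq_entryI[of _ X n]) (auto simp: chain_entry_simps)
      ultimately show "w \<in> ?W" by (blast intro: chain_span.intros)
    qed
    have "chain_zero X n = chain_add (chain_zero X n) (chain_smult 0 v)"
      using v by (intro chain_eq_entryI[of _ X n]) (auto simp: chain_entry_simps)
    thus "chain_zero X n \<in> ?W" by (blast intro: chain_span.zero)
  next
    fix x y assume "x \<in> ?W" "y \<in> ?W"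
    then obtain u1 a1 u2 a2 where u: "u1 \<in> chain_span X n S" "x = chain_add u1 (chain_smult a1 v)"
      "u2 \<in> chain_span X n S" "y = chain_add u2 (chain_smult a2 v)" by blast
    have "chain_add x y = chain_add (chain_add u1 u2) (chain_smult (a1 + a2) v)"
      unfolding u(2,4) using v subsetD[OF spanS u(1)] subsetD[OF spanS u(3)]
      by (intro chain_eq_entryI[of _ X n]) (auto simp: chain_entry_simps algebra_simps)
    thus "chain_add x y \<in> ?W" using u by (blast intro: chain_span.intros)
  next
    fix c x assume "x \<in> ?W"
    then obtain u a where u: "u \<in> chain_span X n S" "x = chain_add u (chain_smult a v)" by blast
    have "chain_smult c x = chain_add (chain_smult c u) (chain_smult (c * a) v)"
      unfolding u(2) using v subsetD[OF spanS u(1)]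
      by (intro chain_eq_entryI[of _ X n]) (auto simp: chain_entry_simps algebra_simps)
    thus "chain_smult c x \<in> ?W" using u by (blast intro: chain_span.intros)
  qed
  with z show ?thesis by blast
qed

definition chain_linear :: "'c bcx \<Rightarrow> nat \<Rightarrow> (('c \<Rightarrow> real vec) \<Rightarrow> real) \<Rightarrow> bool" where
  "chain_linear X n f \<longleftrightarrow> (\<forall>a\<in>chains X n. \<forall>b\<in>chains X n. f (chain_add a b) = f a + f b) \<and>
                         (\<forall>a\<in>chains X n. \<forall>c. f (chain_smult c a) = c * f a)"

lemma chain_linear_zero:
  assumes "chain_linear X n f"
  shows "f (chain_zero X n) = 0"
proof -
  have "chain_smult 0 (chain_zero X n) = chain_zero X n" by (auto simp: chain_smult_def chain_zero_def)
  hence "f (chain_zero X n) = 0 * f (chain_zero X n)"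
    using assms chain_zero_chains unfolding chain_linear_def by metis
  thus ?thesis by simp
qed

lemma chain_linear_cip: "v \<in> chains X n \<Longrightarrow> chain_linear X n (\<lambda>z. cip X n z v)"
  unfolding chain_linear_def by (simp add: cip_add_left cip_smult_left)

text \<open>When \<open>v\<close> is added to the spanning set, its component \<open>v'\<close> orthogonal to the old span is
  found from the representative \<open>x\<^sub>2\<close> of \<open>\<langle>_, v\<rangle>\<close>, and the new representative of \<open>f\<close> is the old
  one plus \<open>f v' / \<langle>v', v'\<rangle>\<close> times \<open>v'\<close> (the quotient being \<open>0\<close> when \<open>v' = 0\<close>).\<close>

lemma chain_span_riesz_insert:
  assumes fin: "finite (cells X)" and S: "S \<subseteq> chains X n" and v: "v \<in> chains X n"
    and f: "chain_linear X n f"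
    and x1: "x1 \<in> chain_span X n S" "\<And>z. z \<in> chain_span X n S \<Longrightarrow> cip X n z x1 = f z"
    and x2: "x2 \<in> chain_span X n S" "\<And>z. z \<in> chain_span X n S \<Longrightarrow> cip X n z x2 = cip X n z v"
  shows "\<exists>x\<in>chain_span X n (insert v S). \<forall>z\<in>chain_span X n (insert v S). cip X n z x = f z"
proof -
  have spanS: "chain_span X n S \<subseteq> chains X n" using chain_span_chains[OF S] .
  have x1c: "x1 \<in> chains X n" and x2c: "x2 \<in> chains X n" using x1 x2 spanS by auto
  define v' where "v' = chain_add v (chain_smult (-1) x2)"
  have v'c: "v' \<in> chains X n" using v x2c by (simp add: v'_def)
  have orth: "cip X n z v' = 0" if "z \<in> chain_span X n S" for z
    using x2(2)[OF that] subsetD[OF spanS that] v x2c by (simp add: v'_def cip_add_right cip_smult_right)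
  define c where "c = f v' / cip X n v' v'"
  have c: "c * cip X n v' v' = f v'"
  proof (cases "cip X n v' v' = 0")
    case True
    thus ?thesis using cip_self_eq_zero_iff[OF fin v'c] chain_linear_zero[OF f] by simp
  qed (simp add: c_def)
  show ?thesis
  proof (intro bexI ballI)
    show "chain_add x1 (chain_smult c v') \<in> chain_span X n (insert v S)"
      unfolding v'_def using x1(1) x2(1) chain_span_mono[of S "insert v S"]
      by (blast intro: chain_span.intros)
    fix z assume "z \<in> chain_span X n (insert v S)"
    then obtain u a where u: "u \<in> chain_span X n S" "z = chain_add u (chain_smult a v)"
      using chain_span_insert[OF S v] by blast
    define u' where "u' = chain_add u (chain_smult a x2)"
    have u': "u' \<in> chain_span X n S" unfolding u'_def using u(1) x2(1) by (blast intro: chain_span.intros)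
    have u'c: "u' \<in> chains X n" using u' spanS by blast
    have z: "z = chain_add u' (chain_smult a v')"
      unfolding u(2) u'_def v'_def using subsetD[OF spanS u(1)] v x2c
      by (intro chain_eq_entryI[of _ X n]) (auto simp: chain_entry_simps algebra_simps)
    have "cip X n z (chain_add x1 (chain_smult c v')) =
        cip X n u' x1 + c * cip X n u' v' + a * (cip X n v' x1 + c * cip X n v' v')"
      unfolding z using u'c v'c x1c
      by (simp add: cip_add_left cip_add_right cip_smult_left cip_smult_right algebra_simps)
    also have "\<dots> = f u' + a * f v'"
      using x1(2)[OF u'] orth[OF u'] orth[OF x1(1)] cip_commute[OF v'c x1c] c by simp
    also have "\<dots> = f z" unfolding z using f u'c v'c by (simp add: chain_linear_def)
    finally show "cip X n z (chain_add x1 (chain_smult c v')) = f z" .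
  qed
qed

lemma chain_span_riesz:
  assumes fin: "finite (cells X)"
  shows "finite S \<Longrightarrow> S \<subseteq> chains X n \<Longrightarrow> chain_linear X n f \<Longrightarrow>
    \<exists>x\<in>chain_span X n S. \<forall>z\<in>chain_span X n S. cip X n z x = f z"
proof (induction S arbitrary: f rule: finite_induct)
  case empty
  thus ?case using chain_linear_zero by (auto simp: chain_span_empty)
next
  case (insert v S)
  hence S: "S \<subseteq> chains X n" and v: "v \<in> chains X n" by auto
  obtain x1 where "x1 \<in> chain_span X n S" "\<And>z. z \<in> chain_span X n S \<Longrightarrow> cip X n z x1 = f z"
    using insert.IH[OF S insert.prems(2)] by blast
  moreover obtain x2 where "x2 \<in> chain_span X n S" "\<And>z. z \<in> chain_span X n S \<Longrightarrow> cip X n z x2 = cip X n z v"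
    using insert.IH[OF S chain_linear_cip[OF v]] by blast
  ultimately show ?case using chain_span_riesz_insert[OF fin S v insert.prems(2)] by blast
qed

section \<open>The kernel of \<open>\<Psi>\<close> is finitely spanned\<close>

definition unit_chains :: "'c bcx \<Rightarrow> nat \<Rightarrow> ('c \<Rightarrow> real vec) set" where
  "unit_chains X n =
     (\<lambda>(a, i). chain_single X n a (unit_vec (cdim X a) i)) ` (SIGMA a:ncells X n. {..<cdim X a})"

lemma unit_chains_chains: "unit_chains X n \<subseteq> chains X n"
  unfolding unit_chains_def using chain_single_chains by fastforce

lemma finite_unit_chains: "finite (cells X) \<Longrightarrow> finite (unit_chains X n)"
  unfolding unit_chains_def using finite_ncells by (intro finite_imageI finite_SigmaI) auto

definition chain_restrict :: "'c bcx \<Rightarrow> nat \<Rightarrow> ('c \<Rightarrow> real vec) \<Rightarrow> ('c \<times> nat) set \<Rightarrow> 'c \<Rightarrow> real vec" where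
  "chain_restrict X n z P = (\<lambda>\<beta>. if \<beta> \<in> ncells X n
     then vec (cdim X \<beta>) (\<lambda>i. if (\<beta>, i) \<in> P then z \<beta> $ i else 0) else 0\<^sub>v 0)"

lemma chain_restrict_chains: "chain_restrict X n z P \<in> chains X n"
  unfolding chain_restrict_def by (rule chainsI) auto

lemma chain_restrict_empty: "chain_restrict X n z {} = chain_zero X n"
  by (auto simp: chain_restrict_def chain_zero_def zero_vec_def)

lemma chain_restrict_all:
  assumes z: "z \<in> chains X n"
  shows "chain_restrict X n z (SIGMA a:ncells X n. {..<cdim X a}) = z"
proof (rule chain_eqI[OF chain_restrict_chains z])
  fix \<beta> assume \<beta>: "\<beta> \<in> ncells X n"
  thus "chain_restrict X n z (SIGMA a:ncells X n. {..<cdim X a}) \<beta> = z \<beta>"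
    using carrier_vecD[OF chainsD[OF z \<beta>]] by (intro eq_vecI) (simp_all add: chain_restrict_def)
qed

lemma chain_restrict_insert:
  assumes a: "a \<in> ncells X n" "i < cdim X a" and new: "(a, i) \<notin> P"
  shows "chain_restrict X n z (insert (a, i) P) =
         chain_add (chain_restrict X n z P) (chain_smult (z a $ i) (chain_single X n a (unit_vec (cdim X a) i)))"
proof (rule chain_eqI[OF chain_restrict_chains])
  show "chain_add (chain_restrict X n z P) (chain_smult (z a $ i) (chain_single X n a (unit_vec (cdim X a) i)))
      \<in> chains X n"
    using a by (intro chain_add_chains chain_restrict_chains chain_smult_chains chain_single_chains) auto
  fix \<beta> assume \<beta>: "\<beta> \<in> ncells X n"
  show "chain_restrict X n z (insert (a, i) P) \<beta> =
      chain_add (chain_restrict X n z P) (chain_smult (z a $ i) (chain_single X n a (unit_vec (cdim X a) i))) \<beta>"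
  proof (cases "\<beta> = a")
    case True
    have "chain_restrict X n z (insert (a, i) P) a =
        chain_restrict X n z P a + z a $ i \<cdot>\<^sub>v unit_vec (cdim X a) i"
      using vec_insert_unit[of i "cdim X a" a P "z a"] a new by (simp add: chain_restrict_def)
    thus ?thesis using True by (simp add: chain_single_def chain_add_def chain_smult_def)
  next
    case False
    thus ?thesis using \<beta>
      by (simp add: chain_restrict_def chain_single_def chain_zero_def chain_add_def chain_smult_def)
  qed
qed

lemma chains_subset_span_unit_chains:
  assumes fin: "finite (cells X)" and z: "z \<in> chains X n"
  shows "z \<in> chain_span X n (unit_chains X n)"
proof -
  let ?I = "SIGMA a:ncells X n. {..<cdim X a}"
  have "P \<subseteq> ?I \<Longrightarrow> chain_restrict X n z P \<in> chain_span X n (unit_chains X n)" if "finite P" for P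
    using that
  proof (induction P rule: finite_induct)
    case (insert p P)
    obtain a i where p: "p = (a, i)" "a \<in> ncells X n" "i < cdim X a" using insert.prems by auto
    have "chain_single X n a (unit_vec (cdim X a) i) \<in> unit_chains X n"
      unfolding unit_chains_def by (rule image_eqI[where x = "(a, i)"]) (use p in simp_all)
    thus ?case using insert chain_restrict_insert[of a X n i P z] p
      by (simp add: chain_span.add chain_span.smult chain_span.base)
  qed (simp add: chain_restrict_empty chain_span.zero)
  moreover have "finite ?I" using finite_ncells[OF fin] by (intro finite_SigmaI) auto
  ultimately show ?thesis using chain_restrict_all[OF z] by force
qed

lemma kerPsi_subset_chains: "kerPsi X Ms n \<subseteq> chains X n"
  by (auto simp: kerPsi_def)

lemma chain_span_subset_kerPsi: "S \<subseteq> kerPsi X Ms n \<Longrightarrow> chain_span X n S \<subseteq> kerPsi X Ms n"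
  by (rule chain_span_minimal) (auto simp: kerPsi_def psi_seq_zero psi_seq_add psi_seq_smult)

text \<open>\<open>z - \<iota> (\<Psi> z)\<close>: a projection onto \<open>Ker \<Psi>\<close>, because \<open>\<Psi> \<iota> = id\<close>.\<close>

definition ker_proj :: "'c bcx \<Rightarrow> ('c \<times> 'c) set list \<Rightarrow> nat \<Rightarrow> ('c \<Rightarrow> real vec) \<Rightarrow> 'c \<Rightarrow> real vec" where
  "ker_proj X Ms n z = chain_add z (chain_smult (-1) (iota_seq X Ms n (psi_seq X Ms n z)))"

context
  fixes X :: "'c bcx" and Ms :: "('c \<times> 'c) set list" and n :: nat
  assumes X: "based_complex X" and Ms: "seq_morse X Ms"
begin

lemma ker_proj_in_kerPsi:
  assumes z: "z \<in> chains X n"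
  shows "ker_proj X Ms n z \<in> kerPsi X Ms n"
proof -
  let ?w = "psi_seq X Ms n z"
  have w: "?w \<in> chains (morse_seq X Ms) n" using z by simp
  have "psi_seq X Ms n (ker_proj X Ms n z) = chain_add ?w (chain_smult (-1) ?w)"
    unfolding ker_proj_def using z w psi_seq_iota_seq[OF X Ms w] by (simp add: psi_seq_add psi_seq_smult)
  also have "\<dots> = chain_zero (morse_seq X Ms) n" using chain_add_neg_self[OF w] .
  finally show ?thesis using z by (simp add: kerPsi_def ker_proj_def)
qed

lemma ker_proj_id: "z \<in> kerPsi X Ms n \<Longrightarrow> ker_proj X Ms n z = z"
  unfolding kerPsi_def ker_proj_def by (simp add: iota_seq_zero chain_add_zero_right)

lemma ker_proj_add:
  "x \<in> chains X n \<Longrightarrow> y \<in> chains X n \<Longrightarrow>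
   ker_proj X Ms n (chain_add x y) = chain_add (ker_proj X Ms n x) (ker_proj X Ms n y)"
  unfolding ker_proj_def by (simp add: psi_seq_add iota_seq_add chain_sub_add)

lemma ker_proj_smult: "x \<in> chains X n \<Longrightarrow> ker_proj X Ms n (chain_smult c x) = chain_smult c (ker_proj X Ms n x)"
  unfolding ker_proj_def by (simp add: psi_seq_smult iota_seq_smult chain_sub_smult)

lemma kerPsi_eq_span: "kerPsi X Ms n = chain_span X n (ker_proj X Ms n ` unit_chains X n)"
proof
  have "ker_proj X Ms n (chain_zero X n) = chain_zero X n"
    using ker_proj_id[of "chain_zero X n"] by (simp add: kerPsi_def psi_seq_zero)
  hence image: "ker_proj X Ms n ` chain_span X n (unit_chains X n) \<subseteq>
      chain_span X n (ker_proj X Ms n ` unit_chains X n)"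
    using chain_span_image[OF unit_chains_chains] ker_proj_add ker_proj_smult by blast
  show "kerPsi X Ms n \<subseteq> chain_span X n (ker_proj X Ms n ` unit_chains X n)"
  proof
    fix z assume z: "z \<in> kerPsi X Ms n"
    hence "z \<in> chain_span X n (unit_chains X n)"
      using chains_subset_span_unit_chains[OF based_complex.finite_cells[OF X]] kerPsi_subset_chains
      by blast
    thus "z \<in> chain_span X n (ker_proj X Ms n ` unit_chains X n)" using image ker_proj_id[OF z] by force
  qed
next
  show "chain_span X n (ker_proj X Ms n ` unit_chains X n) \<subseteq> kerPsi X Ms n"
    using ker_proj_in_kerPsi unit_chains_chains by (intro chain_span_subset_kerPsi) blast
qed

lemma kerPsi_riesz:
  assumes f: "chain_linear X n f"
  shows "\<exists>x\<in>kerPsi X Ms n. \<forall>z\<in>kerPsi X Ms n. cip X n z x = f z"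
proof -
  have fin: "finite (cells X)" by (rule based_complex.finite_cells[OF X])
  have "ker_proj X Ms n ` unit_chains X n \<subseteq> chains X n"
    using ker_proj_in_kerPsi kerPsi_subset_chains unit_chains_chains by blast
  from chain_span_riesz[OF fin finite_imageI[OF finite_unit_chains[OF fin]] this f]
  show ?thesis unfolding kerPsi_eq_span .
qed

end

section \<open>The adjoint of the restricted boundary\<close>

lemma adj_im_zero_if_ker_cycles:
  assumes fin: "finite (cells X)" and cycles: "\<forall>z\<in>kerPsi X Ms n. bdry X n z = chain_zero X (n - 1)"
    and x: "x \<in> adj_im X Ms n"
  shows "x = chain_zero X n"
proof -
  obtain y where xK: "x \<in> kerPsi X Ms n" and y: "y \<in> kerPsi X Ms (n - 1)"
    and adj: "\<forall>z\<in>kerPsi X Ms n. cip X (n - 1) (bdry X n z) y = cip X n z x"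
    using x unfolding adj_im_def by blast
  have "cip X n x x = 0" using adj xK y cycles by (force simp: kerPsi_def)
  thus ?thesis using cip_self_eq_zero_iff[OF fin] xK by (simp add: kerPsi_def)
qed

text \<open>For \<open>z\<close> in the kernel, \<open>y = \<partial> z\<close> lies in the kernel one degree lower, and the representative
  \<open>x\<close> of \<open>\<langle>\<partial> _, y\<rangle>\<close> on the kernel lies in the image of the adjoint; \<open>x = 0\<close> forces \<open>\<langle>y, y\<rangle> = 0\<close>.\<close>

lemma ker_cycles_if_adj_im_zero:
  assumes X: "based_complex X" and Ms: "seq_morse X Ms"
    and trivial: "\<forall>x\<in>adj_im X Ms n. x = chain_zero X n" and z: "z \<in> kerPsi X Ms n"
  shows "bdry X n z = chain_zero X (n - 1)"
proof -
  let ?y = "bdry X n z"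
  have zc: "z \<in> chains X n" using z by (simp add: kerPsi_def)
  have y: "?y \<in> kerPsi X Ms (n - 1)"
    using z psi_seq_bdry[OF X Ms zc] based_complex.bdry_zero[OF based_morse_seq[OF X Ms]]
      bdry_chains[of X n z]
    by (simp add: kerPsi_def)
  have "chain_linear X n (\<lambda>z'. cip X (n - 1) (bdry X n z') ?y)"
    unfolding chain_linear_def
  proof (intro conjI ballI allI)
    fix a b assume "a \<in> chains X n" "b \<in> chains X n"
    thus "cip X (n - 1) (bdry X n (chain_add a b)) ?y = cip X (n - 1) (bdry X n a) ?y + cip X (n - 1) (bdry X n b) ?y"
      using based_complex.bdry_add[OF X] cip_add_left[OF bdry_chains bdry_chains bdry_chains] by metis
  next
    fix a c assume "a \<in> chains X n"
    thus "cip X (n - 1) (bdry X n (chain_smult c a)) ?y = c * cip X (n - 1) (bdry X n a) ?y"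
      using based_complex.bdry_smult[OF X] cip_smult_left[OF bdry_chains bdry_chains] by metis
  qed
  then obtain x where x: "x \<in> kerPsi X Ms n"
    and rep: "\<forall>z'\<in>kerPsi X Ms n. cip X n z' x = cip X (n - 1) (bdry X n z') ?y"
    using kerPsi_riesz[OF X Ms] by blast
  have "x \<in> adj_im X Ms n" unfolding adj_im_def using x y rep by auto
  hence "cip X (n - 1) ?y ?y = 0" using trivial rep z zc by force
  thus ?thesis using cip_self_eq_zero_iff[OF based_complex.finite_cells[OF X] bdry_chains] by blast
qed

lemma adj_im_trivial_iff:
  "based_complex X \<Longrightarrow> seq_morse X Ms \<Longrightarrow>
   (\<forall>x\<in>adj_im X Ms n. x = chain_zero X n) \<longleftrightarrow> (\<forall>z\<in>kerPsi X Ms n. bdry X n z = chain_zero X (n - 1))"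
  using adj_im_zero_if_ker_cycles[OF based_complex.finite_cells] ker_cycles_if_adj_im_zero by blast

lemma orthonormal_basis_empty_iff:
  assumes "orthonormal_basis X n W R"
  shows "R = {} \<longleftrightarrow> (\<forall>x\<in>W. x = chain_zero X n)"
proof
  assume "R = {}"
  moreover have "lincomb X n c {} = chain_zero X n" for c
    by (auto simp: lincomb_def chain_zero_def vsum_def zero_vec_def)
  ultimately show "\<forall>x\<in>W. x = chain_zero X n"
    using assms unfolding orthonormal_basis_def by metis
next
  assume "\<forall>x\<in>W. x = chain_zero X n"
  thus "R = {}" using assms by (force simp: orthonormal_basis_def)
qed

theorem mainTheorem8:
  fixes X :: "'c bcx" and Ms :: "('c \<times> 'c) set list" and n :: nat
    and R :: "('c \<Rightarrow> real vec) set"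
  assumes "based_cx X"
    and "seq_morse X Ms"
    and "Rplus X Ms n R"
  shows "seq_free X Ms n \<longleftrightarrow> morsification_free R"
proof -
  have X: "based_complex X" using assms(1) by unfold_locales
  have "seq_free X Ms n \<longleftrightarrow> (\<forall>z\<in>kerPsi X Ms n. bdry X n z = chain_zero X (n - 1))"
    by (rule seq_free_iff_ker_psi_seq_cycles[OF X assms(2)])
  also have "\<dots> \<longleftrightarrow> (\<forall>x\<in>adj_im X Ms n. x = chain_zero X n)"
    by (rule adj_im_trivial_iff[OF X assms(2), symmetric])
  also have "\<dots> \<longleftrightarrow> R = {}"
    using orthonormal_basis_empty_iff assms(3) unfolding Rplus_def by blast
  finally show ?thesis unfolding morsification_free_def .
qed

end
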